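(* Let $(E,\Sigma,m)$ be a $\sigma$-finite measure space and $L^1=L^1(E,\Sigma,m)$. Let $(A_0,\mathcal{D}(A_0))$ be the infinitesimal generator of a stochastic semigroup on $L^1$, let $\varphi\ge 0$ be a measurable function on $E$, and let $P\colon L^1\to L^1$ be a stochastic operator. Let $L^1_\varphi=\{u\in L^1:\int_E\varphi|u|\,dm<\infty\}$ and let $A u=A_0u-\varphi u$ be defined on a domain $\mathcal{D}(A)\subseteq\mathcal{D}(A_0)\cap L^1_\varphi$, and assume that $(A,\mathcal{D}(A))$ is the infinitesimal generator of a positive strongly continuous contraction semigroup on $L^1$. Denote by $R(\lambda,A)=(\lambda-A)^{-1}$ its resolvent. If for some $\lambda>0$ there is $v\in L^1$ with $v>0$ a.e. such that $P(\varphi R(\lambda,A)v)\le v$, then \[ \lim_{n\to\infty}\|(P(\varphi R(\lambda,A)))^n u\|=0\quad\text{for all } u\in L^1 . \]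
   Context: A linear operator $P\colon L^1\to L^1$ is stochastic if it maps the set of densities $D=\{u\in L^1: u\ge 0,\ \|u\|=1\}$ into itself. A stochastic semigroup is a strongly continuous semigroup of stochastic operators. Note that $\varphi R(\lambda,A)$ maps $L^1$ into $L^1$ since the range of $R(\lambda,A)$ is $\mathcal{D}(A)\subseteq L^1_\varphi$. *)

theory Defs
  imports "HOL-Analysis.Analysis"
begin

text \<open>Elements of L^1(E,Sigma,m) are represented by integrable real functions;
  two representatives denote the same element iff they agree a.e.
  Operators are functions on representatives which must respect a.e. equality.\<close>

definition L1 :: "'a measure \<Rightarrow> ('a \<Rightarrow> real) set" where
  "L1 M = {f. integrable M f}"

definition l1norm :: "'a measure \<Rightarrow> ('a \<Rightarrow> real) \<Rightarrow> real" where
  "l1norm M f = (\<integral>x. \<bar>f x\<bar> \<partial>M)"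

definition ae_eq :: "'a measure \<Rightarrow> ('a \<Rightarrow> real) \<Rightarrow> ('a \<Rightarrow> real) \<Rightarrow> bool" where
  "ae_eq M f g \<longleftrightarrow> (AE x in M. f x = g x)"

definition lin_op :: "'a measure \<Rightarrow> (('a \<Rightarrow> real) \<Rightarrow> ('a \<Rightarrow> real)) \<Rightarrow> bool" where
  "lin_op M T \<longleftrightarrow>
     (\<forall>f\<in>L1 M. T f \<in> L1 M) \<and>
     (\<forall>f\<in>L1 M. \<forall>g\<in>L1 M. ae_eq M f g \<longrightarrow> ae_eq M (T f) (T g)) \<and>
     (\<forall>f\<in>L1 M. \<forall>g\<in>L1 M. \<forall>a b::real.
        ae_eq M (T (\<lambda>x. a * f x + b * g x)) (\<lambda>x. a * T f x + b * T g x))"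

definition density :: "'a measure \<Rightarrow> ('a \<Rightarrow> real) \<Rightarrow> bool" where
  "density M u \<longleftrightarrow> u \<in> L1 M \<and> (AE x in M. u x \<ge> 0) \<and> l1norm M u = 1"

definition stochastic_op :: "'a measure \<Rightarrow> (('a \<Rightarrow> real) \<Rightarrow> ('a \<Rightarrow> real)) \<Rightarrow> bool" where
  "stochastic_op M T \<longleftrightarrow> lin_op M T \<and> (\<forall>u. density M u \<longrightarrow> density M (T u))"

definition positive_op :: "'a measure \<Rightarrow> (('a \<Rightarrow> real) \<Rightarrow> ('a \<Rightarrow> real)) \<Rightarrow> bool" where
  "positive_op M T \<longleftrightarrow> (\<forall>u\<in>L1 M. (AE x in M. u x \<ge> 0) \<longrightarrow> (AE x in M. T u x \<ge> 0))"

definition contraction_op :: "'a measure \<Rightarrow> (('a \<Rightarrow> real) \<Rightarrow> ('a \<Rightarrow> real)) \<Rightarrow> bool" where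
  "contraction_op M T \<longleftrightarrow> (\<forall>u\<in>L1 M. l1norm M (T u) \<le> l1norm M u)"

definition C0_semigroup :: "'a measure \<Rightarrow> (real \<Rightarrow> ('a \<Rightarrow> real) \<Rightarrow> ('a \<Rightarrow> real)) \<Rightarrow> bool" where
  "C0_semigroup M S \<longleftrightarrow>
     (\<forall>t\<ge>0. lin_op M (S t)) \<and>
     (\<forall>f\<in>L1 M. ae_eq M (S 0 f) f) \<and>
     (\<forall>s\<ge>0. \<forall>t\<ge>0. \<forall>f\<in>L1 M. ae_eq M (S (s + t) f) (S s (S t f))) \<and>
     (\<forall>f\<in>L1 M. \<forall>t0\<ge>0.
        ((\<lambda>t. l1norm M (\<lambda>x. S t f x - S t0 f x)) \<longlongrightarrow> 0) (at t0 within {0..}))"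

definition stochastic_semigroup :: "'a measure \<Rightarrow> (real \<Rightarrow> ('a \<Rightarrow> real) \<Rightarrow> ('a \<Rightarrow> real)) \<Rightarrow> bool" where
  "stochastic_semigroup M S \<longleftrightarrow> C0_semigroup M S \<and> (\<forall>t\<ge>0. stochastic_op M (S t))"

definition is_generator :: "'a measure \<Rightarrow> (real \<Rightarrow> ('a \<Rightarrow> real) \<Rightarrow> ('a \<Rightarrow> real))
    \<Rightarrow> ('a \<Rightarrow> real) set \<Rightarrow> (('a \<Rightarrow> real) \<Rightarrow> ('a \<Rightarrow> real)) \<Rightarrow> bool" where
  "is_generator M S D A \<longleftrightarrow>
     D = {f \<in> L1 M. \<exists>g\<in>L1 M.
            ((\<lambda>h. l1norm M (\<lambda>x. (S h f x - f x) / h - g x)) \<longlongrightarrow> 0) (at_right 0)} \<and>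
     (\<forall>f\<in>D. A f \<in> L1 M \<and>
            ((\<lambda>h. l1norm M (\<lambda>x. (S h f x - f x) / h - A f x)) \<longlongrightarrow> 0) (at_right 0))"

definition L1_weighted :: "'a measure \<Rightarrow> ('a \<Rightarrow> real) \<Rightarrow> ('a \<Rightarrow> real) set" where
  "L1_weighted M \<phi> = {u \<in> L1 M. (\<integral>\<^sup>+ x. ennreal (\<phi> x * \<bar>u x\<bar>) \<partial>M) < \<infinity>}"

definition resolvent :: "'a measure \<Rightarrow> ('a \<Rightarrow> real) set \<Rightarrow> (('a \<Rightarrow> real) \<Rightarrow> ('a \<Rightarrow> real))
    \<Rightarrow> real \<Rightarrow> ('a \<Rightarrow> real) \<Rightarrow> ('a \<Rightarrow> real)" where
  "resolvent M D A lam v = (SOME u. u \<in> D \<and> ae_eq M (\<lambda>x. lam * u x - A u x) v)"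

end

theory Submission
  imports Defs
begin

text \<open>
  Write R = R(lam, A) and K = P(\<phi> R). Since A = A0 - \<phi> and the generator A0 of a stochastic
  semigroup satisfies \<integral> A0 u = 0, integrating lam u - A u = w for u = R w gives, for w \<ge> 0,
  \<parallel>K w\<parallel> = \<integral> \<phi> u = \<parallel>w\<parallel> - lam \<parallel>u\<parallel>. Hence K is a positive contraction without nonzero nonnegative
  fixed points. If K v \<le> v, the iterates K^n v decrease, so they converge in L^1 to a fixed point,
  which must be 0. As v > 0, every u is the L^1 limit of its truncations to [-m v, m v], whose
  iterates are dominated by m K^n v.

  Because the resolvent is given by a choice operator, its existence has to be proved: R w is
  constructed as the L^1 limit of dyadic Riemann sums d \<Sum>k e^(-lam k d) S(d)^k w of the Laplace
  transform \<integral> e^(-lam t) S(t) w dt. Positivity, linearity and uniqueness of R follow from the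
  dissipativity \<integral>{u < 0} A u \<ge> 0 of the generator of a positive contraction semigroup.
\<close>

section \<open>The $L^1$ norm and almost-everywhere equality\<close>

lemma l1norm_nonneg [simp]: "0 \<le> l1norm M f"
  unfolding l1norm_def by simp

lemma l1norm_cong_ae: "integrable M f \<Longrightarrow> integrable M g \<Longrightarrow> ae_eq M f g \<Longrightarrow> l1norm M f = l1norm M g"
  unfolding l1norm_def ae_eq_def
  by (rule integral_cong_AE) (auto elim!: eventually_mono)

lemma l1norm_cmult: "l1norm M (\<lambda>x. c * f x) = \<bar>c\<bar> * l1norm M f"
  unfolding l1norm_def by (simp add: abs_mult)

lemma l1norm_uminus: "l1norm M (\<lambda>x. - f x) = l1norm M f"
  unfolding l1norm_def by simp

lemma l1norm_add_le: "integrable M f \<Longrightarrow> integrable M g \<Longrightarrow> l1norm M (\<lambda>x. f x + g x) \<le> l1norm M f + l1norm M g"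
proof -
  assume a: "integrable M f" "integrable M g"
  have "(\<integral>x. \<bar>f x + g x\<bar> \<partial>M) \<le> (\<integral>x. \<bar>f x\<bar> + \<bar>g x\<bar> \<partial>M)"
    using a by (intro integral_mono) (auto intro: abs_triangle_ineq)
  also have "\<dots> = (\<integral>x. \<bar>f x\<bar> \<partial>M) + (\<integral>x. \<bar>g x\<bar> \<partial>M)"
    using a by (intro Bochner_Integration.integral_add) auto
  finally show ?thesis unfolding l1norm_def .
qed

lemma l1norm_diff_le: "integrable M f \<Longrightarrow> integrable M g \<Longrightarrow> l1norm M (\<lambda>x. f x - g x) \<le> l1norm M f + l1norm M g"
  using l1norm_add_le[of M f "\<lambda>x. - g x"] l1norm_uminus[of M g] by simp

lemma l1norm_triangle: "integrable M f \<Longrightarrow> integrable M g \<Longrightarrow> integrable M h \<Longrightarrow>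
   l1norm M (\<lambda>x. f x - h x) \<le> l1norm M (\<lambda>x. f x - g x) + l1norm M (\<lambda>x. g x - h x)"
  using l1norm_add_le[of M "\<lambda>x. f x - g x" "\<lambda>x. g x - h x"] by simp

lemma l1norm_diff_commute: "l1norm M (\<lambda>x. f x - g x) = l1norm M (\<lambda>x. g x - f x)"
  unfolding l1norm_def by (simp add: abs_minus_commute)

lemma l1norm_eq_0_iff: "integrable M f \<Longrightarrow> l1norm M f = 0 \<longleftrightarrow> (AE x in M. f x = 0)"
  unfolding l1norm_def by (subst integral_nonneg_eq_0_iff_AE) auto

lemma l1norm_eq_0_imp_ae_eq: "integrable M f \<Longrightarrow> integrable M g \<Longrightarrow> l1norm M (\<lambda>x. f x - g x) = 0 \<Longrightarrow> ae_eq M f g"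
  unfolding ae_eq_def by (subst (asm) l1norm_eq_0_iff) auto

lemma l1norm_le_0_imp_ae_eq: "integrable M f \<Longrightarrow> integrable M g \<Longrightarrow> l1norm M (\<lambda>x. f x - g x) \<le> 0 \<Longrightarrow> ae_eq M f g"
  using l1norm_nonneg[of M "\<lambda>x. f x - g x"] l1norm_eq_0_imp_ae_eq[of M f g] by linarith

lemma l1norm_mono_ae: "integrable M g \<Longrightarrow> f \<in> borel_measurable M \<Longrightarrow> (AE x in M. \<bar>f x\<bar> \<le> \<bar>g x\<bar>) \<Longrightarrow> l1norm M f \<le> l1norm M g"
  unfolding l1norm_def
  by (rule integral_mono_AE) (auto intro: Bochner_Integration.integrable_bound[of M g])

lemma abs_integral_le_l1norm: "\<bar>integral\<^sup>L M f\<bar> \<le> l1norm M f"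
  unfolding l1norm_def using integral_norm_bound[of M f] by simp

lemma l1norm_eq_integral: "(AE x in M. 0 \<le> f x) \<Longrightarrow> f \<in> borel_measurable M \<Longrightarrow> l1norm M f = integral\<^sup>L M f"
  unfolding l1norm_def by (rule integral_cong_AE) (auto elim!: eventually_mono)

lemma ae_eq_refl: "ae_eq M f f" by (simp add: ae_eq_def)
lemma ae_eq_sym: "ae_eq M f g \<Longrightarrow> ae_eq M g f" by (auto simp: ae_eq_def elim!: eventually_mono)
lemma ae_eq_trans: "ae_eq M f g \<Longrightarrow> ae_eq M g h \<Longrightarrow> ae_eq M f h"
  unfolding ae_eq_def by (auto elim: eventually_elim2)

lemma ae_eq_sum:
  fixes f g :: "nat \<Rightarrow> 'a \<Rightarrow> real"
  assumes "\<And>k. ae_eq M (f k) (g k)"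
  shows "ae_eq M (\<lambda>x. \<Sum>k<n. f k x) (\<lambda>x. \<Sum>k<n. g k x)"
proof -
  have "AE x in M. \<forall>k. f k x = g k x" using assms unfolding ae_eq_def by (simp add: AE_all_countable)
  then show ?thesis unfolding ae_eq_def by (rule eventually_mono) simp
qed

lemma l1norm_sum_le:
  fixes f :: "nat \<Rightarrow> 'a \<Rightarrow> real"
  assumes "\<And>k. integrable M (f k)"
  shows "l1norm M (\<lambda>x. \<Sum>k<n. f k x) \<le> (\<Sum>k<n. l1norm M (f k))"
proof (induction n)
  case 0 then show ?case by (simp add: l1norm_def)
next
  case (Suc n)
  have "l1norm M (\<lambda>x. \<Sum>k<Suc n. f k x) \<le> l1norm M (\<lambda>x. \<Sum>k<n. f k x) + l1norm M (f n)"
    using l1norm_add_le[of M "\<lambda>x. \<Sum>k<n. f k x" "f n"] assms by simp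
  then show ?case using Suc by simp
qed

lemma l1norm_add3_le:
  assumes "integrable M a" "integrable M b" "integrable M c"
  shows "l1norm M (\<lambda>x. a x + b x + c x) \<le> l1norm M a + l1norm M b + l1norm M c"
  using l1norm_add_le[of M "\<lambda>x. a x + b x" c] l1norm_add_le[of M a b] assms by simp

lemma l1norm_add4_le:
  assumes "integrable M a" "integrable M b" "integrable M c" "integrable M d"
  shows "l1norm M (\<lambda>x. a x + b x + c x + d x) \<le> l1norm M a + l1norm M b + l1norm M c + l1norm M d"
  using l1norm_add_le[of M "\<lambda>x. a x + b x + c x" d] l1norm_add3_le[of M a b c] assms by simp

lemma l1_limit_unique:
  assumes F: "F \<noteq> bot" and ia: "integrable M a" and ib: "integrable M b"
    and ix: "\<forall>\<^sub>F n in F. integrable M (x n)"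
    and la: "((\<lambda>n. l1norm M (\<lambda>y. x n y - a y)) \<longlongrightarrow> 0) F"
    and lb: "((\<lambda>n. l1norm M (\<lambda>y. x n y - b y)) \<longlongrightarrow> 0) F"
  shows "ae_eq M a b"
proof -
  have "((\<lambda>n. l1norm M (\<lambda>y. x n y - a y) + l1norm M (\<lambda>y. x n y - b y)) \<longlongrightarrow> 0) F"
    using tendsto_add[OF la lb] by simp
  moreover have "\<forall>\<^sub>F n in F. l1norm M (\<lambda>y. a y - b y) \<le> l1norm M (\<lambda>y. x n y - a y) + l1norm M (\<lambda>y. x n y - b y)"
    using ix
  proof eventually_elim
    case (elim n)
    have "l1norm M (\<lambda>y. a y - b y) \<le> l1norm M (\<lambda>y. a y - x n y) + l1norm M (\<lambda>y. x n y - b y)"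
      by (rule l1norm_triangle) (use elim ia ib in auto)
    then show ?case using l1norm_diff_commute[of M a "x n"] by simp
  qed
  ultimately have "l1norm M (\<lambda>y. a y - b y) \<le> 0"
    using F by (intro tendsto_le[OF F _ tendsto_const]) auto
  then show ?thesis by (rule l1norm_le_0_imp_ae_eq[OF ia ib])
qed

section \<open>Positive contractions on $L^1$\<close>

lemma lin_op_integrable: "lin_op M T \<Longrightarrow> integrable M f \<Longrightarrow> integrable M (T f)"
  unfolding lin_op_def L1_def by auto

lemma lin_op_cong: "lin_op M T \<Longrightarrow> integrable M f \<Longrightarrow> integrable M g \<Longrightarrow> ae_eq M f g \<Longrightarrow> ae_eq M (T f) (T g)"
  unfolding lin_op_def L1_def by auto

lemma lin_op_lincomb: "lin_op M T \<Longrightarrow> integrable M f \<Longrightarrow> integrable M g \<Longrightarrow>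
    ae_eq M (T (\<lambda>x. a * f x + b * g x)) (\<lambda>x. a * T f x + b * T g x)"
  unfolding lin_op_def L1_def by auto

lemma lin_op_cmult: "lin_op M T \<Longrightarrow> integrable M f \<Longrightarrow> ae_eq M (T (\<lambda>x. a * f x)) (\<lambda>x. a * T f x)"
  using lin_op_lincomb[of M T f f a 0] by simp

lemma lin_op_add: "lin_op M T \<Longrightarrow> integrable M f \<Longrightarrow> integrable M g \<Longrightarrow>
    ae_eq M (T (\<lambda>x. f x + g x)) (\<lambda>x. T f x + T g x)"
  using lin_op_lincomb[of M T f g 1 1] by simp

lemma lin_op_diff: "lin_op M T \<Longrightarrow> integrable M f \<Longrightarrow> integrable M g \<Longrightarrow>
    ae_eq M (T (\<lambda>x. f x - g x)) (\<lambda>x. T f x - T g x)"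
  using lin_op_lincomb[of M T f g 1 "-1"] by simp

lemma lin_op_zero: "lin_op M T \<Longrightarrow> ae_eq M (T (\<lambda>x. 0)) (\<lambda>x. 0)"
  using lin_op_lincomb[of M T "\<lambda>x. 0" "\<lambda>x. 0" 0 0] by simp

lemma lin_op_ae_zero: "lin_op M T \<Longrightarrow> integrable M f \<Longrightarrow> (AE x in M. f x = 0) \<Longrightarrow> AE x in M. T f x = 0"
  using lin_op_cong[of M T f "\<lambda>x. 0"] lin_op_zero[of M T]
  by (auto simp: ae_eq_def elim: eventually_elim2)

lemma lin_op_sum: fixes f :: "nat \<Rightarrow> 'a \<Rightarrow> real" shows "lin_op M T \<Longrightarrow> (\<And>k. integrable M (f k)) \<Longrightarrow>
   ae_eq M (T (\<lambda>x. \<Sum>k<n. f k x)) (\<lambda>x. \<Sum>k<n. T (f k) x)"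
proof (induction n)
  case 0 then show ?case using lin_op_zero[of M T] by simp
next
  case (Suc n)
  have "ae_eq M (T (\<lambda>x. \<Sum>k<Suc n. f k x)) (\<lambda>x. T (\<lambda>x. \<Sum>k<n. f k x) x + T (f n) x)"
    using lin_op_add[of M T "\<lambda>x. \<Sum>k<n. f k x" "f n"] Suc by simp
  then show ?case using Suc.IH[OF Suc.prems] unfolding ae_eq_def by (auto elim: eventually_elim2)
qed

lemma contraction_op_diff_le: "lin_op M T \<Longrightarrow> contraction_op M T \<Longrightarrow> integrable M f \<Longrightarrow> integrable M g \<Longrightarrow>
   l1norm M (\<lambda>x. T f x - T g x) \<le> l1norm M (\<lambda>x. f x - g x)"
proof -
  assume a: "lin_op M T" "contraction_op M T" "integrable M f" "integrable M g"
  have "l1norm M (\<lambda>x. T f x - T g x) = l1norm M (T (\<lambda>x. f x - g x))"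
    using a by (intro l1norm_cong_ae ae_eq_sym[OF lin_op_diff]) (auto intro: lin_op_integrable)
  also have "\<dots> \<le> l1norm M (\<lambda>x. f x - g x)"
    using a unfolding contraction_op_def L1_def by auto
  finally show ?thesis .
qed

lemma contraction_op_le: "contraction_op M T \<Longrightarrow> integrable M f \<Longrightarrow> l1norm M (T f) \<le> l1norm M f"
  unfolding contraction_op_def L1_def by auto

lemma positive_op_mono: "lin_op M T \<Longrightarrow> positive_op M T \<Longrightarrow> integrable M f \<Longrightarrow> integrable M g \<Longrightarrow>
    (AE x in M. f x \<le> g x) \<Longrightarrow> AE x in M. T f x \<le> T g x"
proof -
  assume a: "lin_op M T" "positive_op M T" "integrable M f" "integrable M g" "AE x in M. f x \<le> g x"
  have "AE x in M. 0 \<le> T (\<lambda>x. g x - f x) x"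
    using a unfolding positive_op_def L1_def by (auto elim!: eventually_mono)
  moreover have "ae_eq M (T (\<lambda>x. g x - f x)) (\<lambda>x. T g x - T f x)" using a by (intro lin_op_diff) auto
  ultimately show ?thesis unfolding ae_eq_def by (auto elim: eventually_elim2)
qed

lemma positive_op_nonneg: "positive_op M T \<Longrightarrow> integrable M f \<Longrightarrow> (AE x in M. 0 \<le> f x) \<Longrightarrow> AE x in M. 0 \<le> T f x"
  unfolding positive_op_def L1_def by auto

lemma lin_op_comp:
  assumes T: "lin_op M T" and U: "lin_op M U"
  shows "lin_op M (\<lambda>f. T (U f))"
  unfolding lin_op_def L1_def
proof (intro conjI ballI allI impI)
  fix f :: "'a \<Rightarrow> real" assume "f \<in> {f. integrable M f}" then show "T (U f) \<in> {f. integrable M f}"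
    using lin_op_integrable[OF T lin_op_integrable[OF U]] by auto
next
  fix f g :: "'a \<Rightarrow> real" assume "f \<in> {f. integrable M f}" "g \<in> {f. integrable M f}" "ae_eq M f g"
  then show "ae_eq M (T (U f)) (T (U g))"
    using lin_op_cong[OF T lin_op_integrable[OF U] lin_op_integrable[OF U] lin_op_cong[OF U]] by auto
next
  fix f g :: "'a \<Rightarrow> real" and a b :: real assume fg: "f \<in> {f. integrable M f}" "g \<in> {f. integrable M f}"
  have i: "integrable M f" "integrable M g" "integrable M (U f)" "integrable M (U g)"
    using fg lin_op_integrable[OF U] by auto
  have "ae_eq M (T (U (\<lambda>x. a * f x + b * g x))) (T (\<lambda>x. a * U f x + b * U g x))"
    by (rule lin_op_cong[OF T lin_op_integrable[OF U] _ lin_op_lincomb[OF U i(1,2)]]) (use i in auto)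
  moreover have "ae_eq M (T (\<lambda>x. a * U f x + b * U g x)) (\<lambda>x. a * T (U f) x + b * T (U g) x)"
    by (rule lin_op_lincomb[OF T i(3,4)])
  ultimately show "ae_eq M (T (U (\<lambda>x. a * f x + b * g x))) (\<lambda>x. a * T (U f) x + b * T (U g) x)"
    by (rule ae_eq_trans)
qed

definition pos_contraction :: "'a measure \<Rightarrow> (('a \<Rightarrow> real) \<Rightarrow> ('a \<Rightarrow> real)) \<Rightarrow> bool" where
  "pos_contraction M T \<longleftrightarrow> lin_op M T \<and> positive_op M T \<and> contraction_op M T"

lemma pos_contractionD:
  assumes "pos_contraction M T"
  shows "lin_op M T" "positive_op M T" "contraction_op M T"
  using assms unfolding pos_contraction_def by auto

lemma pos_contraction_comp:
  assumes T: "pos_contraction M T" and U: "pos_contraction M U"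
  shows "pos_contraction M (\<lambda>f. T (U f))"
proof -
  note T' = pos_contractionD[OF T] and U' = pos_contractionD[OF U]
  have "positive_op M (\<lambda>f. T (U f))"
    unfolding positive_op_def L1_def
    using positive_op_nonneg[OF T'(2) lin_op_integrable[OF U'(1)] positive_op_nonneg[OF U'(2)]] by auto
  moreover have "contraction_op M (\<lambda>f. T (U f))"
    unfolding contraction_op_def L1_def
    using contraction_op_le[OF T'(3) lin_op_integrable[OF U'(1)]] contraction_op_le[OF U'(3)]
    by (auto intro: order_trans)
  ultimately show ?thesis using lin_op_comp[OF T'(1) U'(1)] unfolding pos_contraction_def by auto
qed

lemma pos_contraction_id: "pos_contraction M (\<lambda>f. f)"
  unfolding pos_contraction_def lin_op_def positive_op_def contraction_op_def by (auto simp: ae_eq_def)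

lemma pos_contraction_funpow: fixes T :: "('a \<Rightarrow> real) \<Rightarrow> ('a \<Rightarrow> real)" shows "pos_contraction M T \<Longrightarrow> pos_contraction M (T ^^ n)"
proof (induction n)
  case 0 then show ?case using pos_contraction_id by (simp add: id_def)
next
  case (Suc n) then show ?case using pos_contraction_comp[of M T "T^^n"] by (simp add: o_def)
qed

section \<open>Completeness of $L^1$\<close>

lemma l1_series_summable_ae:
  fixes f :: "nat \<Rightarrow> 'a \<Rightarrow> real"
  assumes int: "\<And>i. integrable M (f i)" and sm: "summable (\<lambda>i. l1norm M (f i))"
  shows "AE x in M. summable (\<lambda>i. \<bar>f i x\<bar>)"
proof -
  have "(\<integral>\<^sup>+x. (\<Sum>i. ennreal \<bar>f i x\<bar>) \<partial>M) = (\<Sum>i. \<integral>\<^sup>+x. ennreal \<bar>f i x\<bar> \<partial>M)"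
    using int by (intro nn_integral_suminf) auto
  also have "\<dots> = (\<Sum>i. ennreal (l1norm M (f i)))"
    unfolding l1norm_def using int
    by (intro arg_cong[where f=suminf] ext nn_integral_eq_integral) auto
  also have "\<dots> < \<infinity>"
    using ennreal_suminf_neq_top[OF sm l1norm_nonneg] by (simp add: less_top[symmetric])
  finally have "AE x in M. (\<Sum>i. ennreal \<bar>f i x\<bar>) < \<infinity>"
    using int by (intro finite_nn_integral_imp_ae_finite) auto
  then show ?thesis
    by (rule eventually_mono) (intro summable_suminf_not_top, auto)
qed

lemma integrable_l1_series:
  fixes f :: "nat \<Rightarrow> 'a \<Rightarrow> real"
  assumes int: "\<And>i. integrable M (f i)" and sm: "summable (\<lambda>i. l1norm M (f i))"
  shows "integrable M (\<lambda>x. \<Sum>i. f i x)"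
  using l1_series_summable_ae[OF int sm] sm unfolding l1norm_def
  by (intro integrable_suminf[OF int]) auto

lemma l1norm_suminf_le:
  fixes f :: "nat \<Rightarrow> 'a \<Rightarrow> real"
  assumes int: "\<And>i. integrable M (f i)" and sm: "summable (\<lambda>i. l1norm M (f i))"
  shows "l1norm M (\<lambda>x. \<Sum>i. f i x) \<le> (\<Sum>i. l1norm M (f i))"
proof -
  note ae = l1_series_summable_ae[OF int sm]
  have sm': "summable (\<lambda>i. \<integral>x. norm (f i x) \<partial>M)" using sm unfolding l1norm_def by simp
  have "l1norm M (\<lambda>x. \<Sum>i. f i x) \<le> (\<integral>x. (\<Sum>i. \<bar>f i x\<bar>) \<partial>M)"
    unfolding l1norm_def
  proof (rule integral_mono_AE)
    show "integrable M (\<lambda>x. \<bar>\<Sum>i. f i x\<bar>)" using integrable_l1_series[OF int sm] by auto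
    show "integrable M (\<lambda>x. \<Sum>i. \<bar>f i x\<bar>)"
      by (rule integrable_suminf) (use int ae sm' in auto)
    show "AE x in M. \<bar>\<Sum>i. f i x\<bar> \<le> (\<Sum>i. \<bar>f i x\<bar>)"
      using ae by (rule eventually_mono) (rule summable_rabs)
  qed
  also have "\<dots> = (\<Sum>i. l1norm M (f i))"
    unfolding l1norm_def by (rule integral_suminf) (use int ae sm' in auto)
  finally show ?thesis .
qed

lemma l1_series_tendsto:
  fixes f :: "nat \<Rightarrow> 'a \<Rightarrow> real"
  assumes int: "\<And>i. integrable M (f i)" and sm: "summable (\<lambda>i. l1norm M (f i))"
  shows "(\<lambda>n. l1norm M (\<lambda>x. (\<Sum>i<n. f i x) - (\<Sum>i. f i x))) \<longlonglongrightarrow> 0"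
proof -
  note ae = l1_series_summable_ae[OF int sm]
  have smn: "summable (\<lambda>i. l1norm M (f (i + n)))" for n
    using sm by (subst summable_iff_shift) 
  have le: "l1norm M (\<lambda>x. (\<Sum>i<n. f i x) - (\<Sum>i. f i x)) \<le> (\<Sum>i. l1norm M (f (i + n)))" for n
  proof -
    have "l1norm M (\<lambda>x. (\<Sum>i<n. f i x) - (\<Sum>i. f i x)) = l1norm M (\<lambda>x. - (\<Sum>i. f (i + n) x))"
    proof (rule l1norm_cong_ae)
      show "integrable M (\<lambda>x. (\<Sum>i<n. f i x) - (\<Sum>i. f i x))"
        using int integrable_l1_series[OF int sm] by auto
      show "integrable M (\<lambda>x. - (\<Sum>i. f (i + n) x))"
        using integrable_l1_series[OF int smn] int by auto
      show "ae_eq M (\<lambda>x. (\<Sum>i<n. f i x) - (\<Sum>i. f i x)) (\<lambda>x. - (\<Sum>i. f (i + n) x))"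
        unfolding ae_eq_def using ae
      proof (rule eventually_mono)
        fix x assume "summable (\<lambda>i. \<bar>f i x\<bar>)"
        then have "summable (\<lambda>i. f i x)" by (rule summable_rabs_cancel)
        then show "(\<Sum>i<n. f i x) - (\<Sum>i. f i x) = - (\<Sum>i. f (i + n) x)"
          using suminf_split_initial_segment[of "\<lambda>i. f i x" n] by simp
      qed
    qed
    also have "\<dots> \<le> (\<Sum>i. l1norm M (f (i + n)))"
      using l1norm_suminf_le[OF int smn] by (simp add: l1norm_uminus)
    finally show ?thesis .
  qed
  have "(\<lambda>n. \<Sum>i. l1norm M (f (i + n))) \<longlonglongrightarrow> 0" by (rule suminf_exist_split2[OF sm])
  then show ?thesis
    by (rule tendsto_sandwich[rotated 2, OF tendsto_const]) (use le in auto)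
qed

lemma l1_cauchy_fast_subseq:
  fixes f :: "nat \<Rightarrow> 'a \<Rightarrow> real"
  assumes C: "\<And>e. e > 0 \<Longrightarrow> \<exists>N. \<forall>m\<ge>N. \<forall>n\<ge>N. l1norm M (\<lambda>x. f m x - f n x) < e"
  obtains r where "strict_mono r" "\<And>k. l1norm M (\<lambda>x. f (r (Suc k)) x - f (r k) x) \<le> (1/2)^k"
proof -
  have "\<exists>r. \<forall>n. (\<forall>m\<ge>r n. \<forall>k\<ge>r n. l1norm M (\<lambda>x. f m x - f k x) < (1/2)^n) \<and> r n < r (Suc n)"
  proof (rule dependent_nat_choice)
    show "\<exists>x. \<forall>m\<ge>x. \<forall>k\<ge>x. l1norm M (\<lambda>x. f m x - f k x) < (1/2)^0" using C[of 1] by simp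
  next
    fix x n
    obtain N where N: "\<forall>m\<ge>N. \<forall>k\<ge>N. l1norm M (\<lambda>x. f m x - f k x) < (1/2)^Suc n"
      using C[of "(1/2)^Suc n"] by auto
    show "\<exists>y. (\<forall>m\<ge>y. \<forall>k\<ge>y. l1norm M (\<lambda>x. f m x - f k x) < (1/2)^Suc n) \<and> x < y"
      by (rule exI[of _ "max N (Suc x)"]) (use N in auto)
  qed
  then obtain r where r: "\<And>n m k. m \<ge> r n \<Longrightarrow> k \<ge> r n \<Longrightarrow> l1norm M (\<lambda>x. f m x - f k x) < (1/2)^n"
    and rs: "\<And>n. r n < r (Suc n)" by blast
  show thesis
  proof
    show "strict_mono r" using rs by (simp add: strict_mono_Suc_iff)
    show "l1norm M (\<lambda>x. f (r (Suc k)) x - f (r k) x) \<le> (1/2)^k" for k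
      using r[of k "r (Suc k)" "r k"] rs[of k] by auto
  qed
qed

lemma l1_fast_cauchy_convergent:
  fixes g :: "nat \<Rightarrow> 'a \<Rightarrow> real"
  assumes int: "\<And>n. integrable M (g n)"
    and fast: "\<And>k. l1norm M (\<lambda>x. g (Suc k) x - g k x) \<le> (1/2)^k"
  shows "\<exists>F. integrable M F \<and> (\<lambda>n. l1norm M (\<lambda>x. g n x - F x)) \<longlonglongrightarrow> 0"
proof -
  define d where "d k x = g (Suc k) x - g k x" for k x
  have dint: "integrable M (d k)" for k unfolding d_def using int by auto
  have dsm: "summable (\<lambda>k. l1norm M (d k))"
    by (rule summable_comparison_test[of _ "\<lambda>k. (1/2::real)^k"]) (use fast in \<open>auto simp: d_def[abs_def]\<close>)
  define F where "F x = g 0 x + (\<Sum>k. d k x)" for x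
  have FI: "integrable M F" unfolding F_def using integrable_l1_series[OF dint dsm] int by auto
  have telescope: "(\<Sum>k<n. d k x) = g n x - g 0 x" for n x
    unfolding d_def by (rule sum_lessThan_telescope)
  have "(\<lambda>n. l1norm M (\<lambda>x. g n x - F x)) \<longlonglongrightarrow> 0"
    using l1_series_tendsto[OF dint dsm] unfolding F_def telescope by (simp add: algebra_simps)
  then show ?thesis using FI by blast
qed

lemma l1_cauchy_subseq_limit:
  fixes f :: "nat \<Rightarrow> 'a \<Rightarrow> real"
  assumes int: "\<And>n. integrable M (f n)" and FI: "integrable M F"
    and C: "\<And>e. e > 0 \<Longrightarrow> \<exists>N. \<forall>m\<ge>N. \<forall>n\<ge>N. l1norm M (\<lambda>x. f m x - f n x) < e"
    and r: "strict_mono r" and sub: "(\<lambda>n. l1norm M (\<lambda>x. f (r n) x - F x)) \<longlonglongrightarrow> 0"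
  shows "(\<lambda>n. l1norm M (\<lambda>x. f n x - F x)) \<longlonglongrightarrow> 0"
proof (rule LIMSEQ_I)
  fix e :: real assume e: "0 < e"
  obtain N where N: "\<forall>m\<ge>N. \<forall>n\<ge>N. l1norm M (\<lambda>x. f m x - f n x) < e/2" using C[of "e/2"] e by auto
  obtain n0 where n0: "\<forall>n\<ge>n0. norm (l1norm M (\<lambda>x. f (r n) x - F x) - 0) < e/2"
    using LIMSEQ_D[OF sub, of "e/2"] e by auto
  show "\<exists>no. \<forall>n\<ge>no. norm (l1norm M (\<lambda>x. f n x - F x) - 0) < e"
  proof (intro exI allI impI)
    fix m assume m: "N \<le> m"
    define n where "n = max n0 N"
    have "r n \<ge> n" using r by (rule seq_suble)
    then have rn: "r n \<ge> N" unfolding n_def by auto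
    have "l1norm M (\<lambda>x. f m x - F x) \<le> l1norm M (\<lambda>x. f m x - f (r n) x) + l1norm M (\<lambda>x. f (r n) x - F x)"
      by (rule l1norm_triangle) (use int FI in auto)
    also have "\<dots> < e/2 + e/2"
      using N[rule_format, OF m rn] n0[rule_format, of n] unfolding n_def by auto
    finally show "norm (l1norm M (\<lambda>x. f m x - F x) - 0) < e" by simp
  qed
qed

lemma l1_cauchy_convergent:
  fixes f :: "nat \<Rightarrow> 'a \<Rightarrow> real"
  assumes int: "\<And>n. integrable M (f n)"
    and C: "\<And>e. e > 0 \<Longrightarrow> \<exists>N. \<forall>m\<ge>N. \<forall>n\<ge>N. l1norm M (\<lambda>x. f m x - f n x) < e"
  shows "\<exists>F. integrable M F \<and> (\<lambda>n. l1norm M (\<lambda>x. f n x - F x)) \<longlonglongrightarrow> 0"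
proof -
  obtain r where r: "strict_mono r" and fast: "\<And>k. l1norm M (\<lambda>x. f (r (Suc k)) x - f (r k) x) \<le> (1/2)^k"
    using l1_cauchy_fast_subseq[OF C] by blast
  obtain F where "integrable M F" "(\<lambda>n. l1norm M (\<lambda>x. f (r n) x - F x)) \<longlonglongrightarrow> 0"
    using l1_fast_cauchy_convergent[of M "\<lambda>n. f (r n)", OF int fast] by blast
  then show ?thesis using l1_cauchy_subseq_limit[OF int _ C r] by blast
qed

section \<open>Stochastic operators\<close>

lemma stochastic_op_lin_op: "stochastic_op M P \<Longrightarrow> lin_op M P" unfolding stochastic_op_def by auto

lemma stochastic_op_nonneg_integral:
  assumes P: "stochastic_op M P" and f: "integrable M f" and fp: "AE x in M. 0 \<le> f x"
  shows "(AE x in M. 0 \<le> P f x) \<and> integral\<^sup>L M (P f) = integral\<^sup>L M f"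
proof -
  have L: "lin_op M P" using P by (rule stochastic_op_lin_op)
  define c where "c = integral\<^sup>L M f"
  have c0: "c \<ge> 0" unfolding c_def using fp by (rule integral_nonneg_AE)
  show ?thesis
  proof (cases "c = 0")
    case True
    then have z: "AE x in M. f x = 0" using f fp unfolding c_def by (subst (asm) integral_nonneg_eq_0_iff_AE) auto
    have zP: "AE x in M. P f x = 0" by (rule lin_op_ae_zero[OF L f z])
    have "integral\<^sup>L M (P f) = integral\<^sup>L M (\<lambda>x. 0)"
      by (rule integral_cong_AE) (use zP lin_op_integrable[OF L f] in \<open>auto elim!: eventually_mono\<close>)
    then show ?thesis using zP True unfolding c_def by (auto elim!: eventually_mono)
  next
    case False
    then have cp: "c > 0" using c0 by simp
    define g where "g x = f x / c" for x
    have gi: "integrable M g" unfolding g_def[abs_def] using f by auto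
    have gp: "AE x in M. 0 \<le> g x" using fp cp unfolding g_def by (auto elim!: eventually_mono)
    have gn: "l1norm M g = 1"
    proof -
      have "l1norm M g = integral\<^sup>L M g" by (rule l1norm_eq_integral[OF gp]) (use gi in auto)
      also have "\<dots> = c / c" unfolding g_def c_def by simp
      finally show ?thesis using cp by simp
    qed
    have dg: "density M g" unfolding density_def L1_def using gi gp gn by auto
    then have dPg: "density M (P g)" using P unfolding stochastic_op_def by auto
    then have Pgi: "integrable M (P g)" and Pgp: "AE x in M. 0 \<le> P g x" and Pgn: "l1norm M (P g) = 1"
      unfolding density_def L1_def by auto
    have cg: "(\<lambda>x. c * g x) = f" unfolding g_def using cp by (auto simp: fun_eq_iff)
    have e: "ae_eq M (P f) (\<lambda>x. c * P g x)" using lin_op_cmult[OF L gi, of c] unfolding cg .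
    have pos: "AE x in M. 0 \<le> P f x" using e Pgp cp unfolding ae_eq_def by (auto elim: eventually_elim2)
    have "integral\<^sup>L M (P f) = integral\<^sup>L M (\<lambda>x. c * P g x)"
      by (rule integral_cong_AE) (use e lin_op_integrable[OF L f] Pgi in \<open>auto simp: ae_eq_def elim!: eventually_mono\<close>)
    also have "\<dots> = c * integral\<^sup>L M (P g)" by simp
    also have "integral\<^sup>L M (P g) = 1" using l1norm_eq_integral[OF Pgp] Pgi Pgn by auto
    finally show ?thesis using pos unfolding c_def by simp
  qed
qed

lemma integrable_pos_neg_parts:
  fixes f :: "'a \<Rightarrow> real"
  assumes f: "integrable M f"
  shows "integrable M (\<lambda>x. max (f x) 0)" "integrable M (\<lambda>x. max (- f x) 0)"
    "(\<lambda>x. max (f x) 0 - max (- f x) 0) = f"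
    "l1norm M f = integral\<^sup>L M (\<lambda>x. max (f x) 0) + integral\<^sup>L M (\<lambda>x. max (- f x) 0)"
proof -
  show i1: "integrable M (\<lambda>x. max (f x) 0)" "integrable M (\<lambda>x. max (- f x) 0)" using f by (auto intro!: integrable_max)
  show "(\<lambda>x. max (f x) 0 - max (- f x) 0) = f" by (rule ext) auto
  have "(\<lambda>x. \<bar>f x\<bar>) = (\<lambda>x. max (f x) 0 + max (- f x) 0)" by (rule ext) auto
  then show "l1norm M f = integral\<^sup>L M (\<lambda>x. max (f x) 0) + integral\<^sup>L M (\<lambda>x. max (- f x) 0)"
    unfolding l1norm_def using i1 by simp
qed

lemma stochastic_op_integral:
  assumes P: "stochastic_op M P" and f: "integrable M f"
  shows "integral\<^sup>L M (P f) = integral\<^sup>L M f"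
proof -
  let ?p = "\<lambda>x. max (f x) 0" and ?m = "\<lambda>x. max (- f x) 0"
  note pn = integrable_pos_neg_parts[OF f]
  have L: "lin_op M P" using P by (rule stochastic_op_lin_op)
  have e: "ae_eq M (P (\<lambda>x. ?p x - ?m x)) (\<lambda>x. P ?p x - P ?m x)" by (rule lin_op_diff[OF L pn(1,2)])
  have "integral\<^sup>L M (P f) = integral\<^sup>L M (\<lambda>x. P ?p x - P ?m x)"
    by (rule integral_cong_AE) (use e pn(3) lin_op_integrable[OF L f] lin_op_integrable[OF L pn(1)] lin_op_integrable[OF L pn(2)] in \<open>auto simp: ae_eq_def elim!: eventually_mono\<close>)
  also have "\<dots> = integral\<^sup>L M ?p - integral\<^sup>L M ?m"
    using lin_op_integrable[OF L pn(1)] lin_op_integrable[OF L pn(2)] stochastic_op_nonneg_integral[OF P pn(1)] stochastic_op_nonneg_integral[OF P pn(2)] by simp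
  also have "\<dots> = integral\<^sup>L M (\<lambda>x. ?p x - ?m x)"
    by (rule Bochner_Integration.integral_diff[symmetric]) (use pn in auto)
  also have "\<dots> = integral\<^sup>L M f" unfolding pn(3) ..
  finally show ?thesis .
qed

lemma pos_contraction_if_nonneg_le:
  assumes L: "lin_op M T" and Pp: "positive_op M T"
    and nn: "\<And>w. integrable M w \<Longrightarrow> (AE x in M. 0 \<le> w x) \<Longrightarrow> l1norm M (T w) \<le> l1norm M w"
  shows "contraction_op M T"
  unfolding contraction_op_def L1_def
proof (intro ballI)
  fix f :: "'a \<Rightarrow> real" assume "f \<in> {f. integrable M f}"
  then have f: "integrable M f" by simp
  let ?p = "\<lambda>x. max (f x) 0" and ?m = "\<lambda>x. max (- f x) 0"
  note pn = integrable_pos_neg_parts[OF f]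
  have e: "ae_eq M (T (\<lambda>x. ?p x - ?m x)) (\<lambda>x. T ?p x - T ?m x)" by (rule lin_op_diff[OF L pn(1,2)])
  have "l1norm M (T f) = l1norm M (\<lambda>x. T ?p x - T ?m x)"
    by (rule l1norm_cong_ae) (use e pn(3) lin_op_integrable[OF L f] lin_op_integrable[OF L pn(1)] lin_op_integrable[OF L pn(2)] in auto)
  also have "\<dots> \<le> l1norm M (T ?p) + l1norm M (T ?m)" by (rule l1norm_diff_le) (use lin_op_integrable[OF L pn(1)] lin_op_integrable[OF L pn(2)] in auto)
  also have "\<dots> \<le> l1norm M ?p + l1norm M ?m" by (intro add_mono nn) (use pn in auto)
  also have "\<dots> = l1norm M f"
  proof -
    have "l1norm M ?p = integral\<^sup>L M ?p" by (rule l1norm_eq_integral) (use pn(1) in auto)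
    moreover have "l1norm M ?m = integral\<^sup>L M ?m" by (rule l1norm_eq_integral) (use pn(2) in auto)
    ultimately show ?thesis using pn(4) by simp
  qed
  finally show "l1norm M (T f) \<le> l1norm M f" .
qed

lemma stochastic_generator_integral_0:
  assumes S0: "stochastic_semigroup M S0" and g: "is_generator M S0 D0 A0" and f: "f \<in> D0"
  shows "integral\<^sup>L M (A0 f) = 0"
proof -
  have fi: "integrable M f" using g f unfolding is_generator_def L1_def by auto
  have Af: "integrable M (A0 f)" "((\<lambda>h. l1norm M (\<lambda>x. (S0 h f x - f x) / h - A0 f x)) \<longlongrightarrow> 0) (at_right 0)"
    using g f unfolding is_generator_def L1_def by auto
  have st: "h \<ge> 0 \<Longrightarrow> stochastic_op M (S0 h)" for h using S0 unfolding stochastic_semigroup_def by auto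
  have le: "\<bar>integral\<^sup>L M (A0 f)\<bar> \<le> l1norm M (\<lambda>x. (S0 h f x - f x) / h - A0 f x)" if h: "h > 0" for h
  proof -
    have si: "integrable M (S0 h f)" using lin_op_integrable[OF stochastic_op_lin_op[OF st] fi] h by auto
    have "integral\<^sup>L M (\<lambda>x. (S0 h f x - f x) / h) = (integral\<^sup>L M (S0 h f) - integral\<^sup>L M f) / h"
      using si fi by simp
    also have "\<dots> = 0" using stochastic_op_integral[OF st fi] h by simp
    finally have z: "integral\<^sup>L M (\<lambda>x. (S0 h f x - f x) / h) = 0" .
    have "integral\<^sup>L M (\<lambda>x. (S0 h f x - f x) / h - A0 f x) = integral\<^sup>L M (\<lambda>x. (S0 h f x - f x) / h) - integral\<^sup>L M (A0 f)"
      by (rule Bochner_Integration.integral_diff) (use si fi Af(1) in auto)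
    then have "\<bar>integral\<^sup>L M (A0 f)\<bar> = \<bar>integral\<^sup>L M (\<lambda>x. (S0 h f x - f x) / h - A0 f x)\<bar>"
      unfolding z by simp
    also have "\<dots> \<le> l1norm M (\<lambda>x. (S0 h f x - f x) / h - A0 f x)" by (rule abs_integral_le_l1norm)
    finally show ?thesis .
  qed
  have "\<bar>integral\<^sup>L M (A0 f)\<bar> \<le> 0"
    by (rule tendsto_lowerbound[OF Af(2)]) (use eventually_at_right_less[of 0] le in \<open>auto elim!: eventually_mono\<close>)
  then show ?thesis by simp
qed

section \<open>Iterates of positive contractions\<close>

lemma l1_antitone_convergent:
  fixes a :: "nat \<Rightarrow> 'a \<Rightarrow> real"
  assumes ai: "\<And>k. integrable M (a k)" and ap: "\<And>k. AE x in M. 0 \<le> a k x"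
    and dec: "\<And>k. AE x in M. a (Suc k) x \<le> a k x"
  shows "\<exists>w. integrable M w \<and> (\<lambda>n. l1norm M (\<lambda>x. a n x - w x)) \<longlonglongrightarrow> 0"
proof -
  have "AE x in M. \<forall>k. a (Suc k) x \<le> a k x" using dec by (simp add: AE_all_countable)
  then have mono_le: "AE x in M. a m x \<le> a k x" if "k \<le> m" for k m
  proof (rule eventually_mono)
    fix x assume "\<forall>k. a (Suc k) x \<le> a k x"
    then have "antimono_on UNIV (\<lambda>k. a k x)" by (intro decseq_SucI) auto
    then show "a m x \<le> a k x" using decseqD that by blast
  qed
  define N where "N k = l1norm M (a k)" for k
  have N_integral: "N k = integral\<^sup>L M (a k)" for k unfolding N_def by (rule l1norm_eq_integral[OF ap]) (use ai in auto)
  have N_diff: "l1norm M (\<lambda>x. a k x - a m x) = N k - N m" if "k \<le> m" for k m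
  proof -
    have "l1norm M (\<lambda>x. a k x - a m x) = integral\<^sup>L M (\<lambda>x. a k x - a m x)"
      by (rule l1norm_eq_integral) (use mono_le[OF that] ai in \<open>auto elim!: eventually_mono\<close>)
    also have "\<dots> = N k - N m" unfolding N_integral using ai by simp
    finally show ?thesis .
  qed
  have "antimono_on UNIV N" using N_diff[of _ "Suc _"] by (intro decseq_SucI) (metis l1norm_nonneg diff_ge_0_iff_ge le_SucI order_refl)
  then obtain L where L: "N \<longlonglongrightarrow> L" by (rule decseq_convergent[of _ 0]) (auto simp: N_def)
  have N_dist: "l1norm M (\<lambda>x. a m x - a n x) = \<bar>N m - N n\<bar>" for m n
    using N_diff[of m n] N_diff[of n m] l1norm_diff_commute[of M "a m" "a n"]
      l1norm_nonneg[of M "\<lambda>x. a m x - a n x"] by (cases "m \<le> n") auto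
  show ?thesis
  proof (rule l1_cauchy_convergent[OF ai])
    fix e :: real assume e: "e > 0"
    then obtain n0 where n0: "\<forall>n\<ge>n0. norm (N n - L) < e/2" using LIMSEQ_D[OF L, of "e/2"] by auto
    show "\<exists>n0. \<forall>m\<ge>n0. \<forall>n\<ge>n0. l1norm M (\<lambda>x. a m x - a n x) < e"
    proof (intro exI allI impI)
      fix m n assume "n0 \<le> m" "n0 \<le> n"
      then have "\<bar>N m - L\<bar> < e/2" "\<bar>N n - L\<bar> < e/2" using n0 by auto
      then show "l1norm M (\<lambda>x. a m x - a n x) < e" unfolding N_dist by linarith
    qed
  qed
qed

lemma l1_limit_nonneg:
  fixes a :: "nat \<Rightarrow> 'a \<Rightarrow> real"
  assumes ai: "\<And>n. integrable M (a n)" and ap: "\<And>n. AE x in M. 0 \<le> a n x" and wi: "integrable M w"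
    and lim: "(\<lambda>n. l1norm M (\<lambda>x. a n x - w x)) \<longlonglongrightarrow> 0"
  shows "AE x in M. 0 \<le> w x"
proof -
  have le: "l1norm M (\<lambda>x. max (- w x) 0) \<le> l1norm M (\<lambda>x. a n x - w x)" for n
    by (rule l1norm_mono_ae) (use ai wi ap[of n] in \<open>auto elim!: eventually_mono\<close>)
  have "l1norm M (\<lambda>x. max (- w x) 0) \<le> 0"
    by (rule LIMSEQ_le_const[OF lim]) (use le in auto)
  then have "AE x in M. max (- w x) 0 = 0"
    using l1norm_eq_0_iff[of M "\<lambda>x. max (- w x) 0"] wi l1norm_nonneg[of M "\<lambda>x. max (- w x) 0"]
    by (auto intro!: integrable_max)
  then show ?thesis by (rule eventually_mono) auto
qed

lemma contraction_orbit_limit_fixed: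
  fixes a :: "nat \<Rightarrow> 'a \<Rightarrow> real"
  assumes K: "lin_op M K" "contraction_op M K"
    and ai: "\<And>n. integrable M (a n)" and aS: "\<And>n. a (Suc n) = K (a n)" and wi: "integrable M w"
    and lim: "(\<lambda>n. l1norm M (\<lambda>x. a n x - w x)) \<longlonglongrightarrow> 0"
  shows "ae_eq M (K w) w"
proof (rule l1_limit_unique[OF trivial_limit_sequentially lin_op_integrable[OF K(1) wi] wi, of "\<lambda>k. a (Suc k)"])
  show "\<forall>\<^sub>F n in sequentially. integrable M (a (Suc n))" using ai by simp
  have "l1norm M (\<lambda>x. a (Suc n) x - K w x) \<le> l1norm M (\<lambda>x. a n x - w x)" for n
    unfolding aS by (rule contraction_op_diff_le[OF K ai wi])
  then show "(\<lambda>n. l1norm M (\<lambda>x. a (Suc n) x - K w x)) \<longlonglongrightarrow> 0"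
    by (intro tendsto_sandwich[OF _ _ tendsto_const lim]) auto
  show "(\<lambda>n. l1norm M (\<lambda>x. a (Suc n) x - w x)) \<longlonglongrightarrow> 0" using LIMSEQ_Suc[OF lim] .
qed

lemma funpow_tendsto_0_subinvariant:
  fixes K :: "('a \<Rightarrow> real) \<Rightarrow> ('a \<Rightarrow> real)"
  assumes K: "pos_contraction M K"
    and no_fixed: "\<And>w. integrable M w \<Longrightarrow> (AE x in M. 0 \<le> w x) \<Longrightarrow> ae_eq M (K w) w \<Longrightarrow> AE x in M. w x = 0"
    and v: "integrable M v" and vp: "AE x in M. 0 \<le> v x" and Kv: "AE x in M. K v x \<le> v x"
  shows "(\<lambda>n. l1norm M ((K ^^ n) v)) \<longlonglongrightarrow> 0"
proof -
  define a where "a k = (K ^^ k) v" for k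
  note Kn = pos_contractionD[OF pos_contraction_funpow[OF K]] and K' = pos_contractionD[OF K]
  have ai: "integrable M (a k)" for k unfolding a_def using lin_op_integrable[OF Kn(1) v] .
  have ap: "AE x in M. 0 \<le> a k x" for k unfolding a_def using positive_op_nonneg[OF Kn(2) v vp] .
  have aS: "a (Suc k) = K (a k)" for k unfolding a_def by simp
  have dec: "AE x in M. a (Suc k) x \<le> a k x" for k
  proof -
    have "a (Suc k) = (K ^^ k) (K v)" unfolding a_def by (simp only: funpow_Suc_right o_apply)
    moreover have "AE x in M. (K ^^ k) (K v) x \<le> (K ^^ k) v x"
      by (rule positive_op_mono[OF Kn(1,2) lin_op_integrable[OF K'(1) v] v Kv])
    ultimately show ?thesis unfolding a_def by simp
  qed
  obtain w where wi: "integrable M w" and lim: "(\<lambda>n. l1norm M (\<lambda>x. a n x - w x)) \<longlonglongrightarrow> 0"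
    using l1_antitone_convergent[of M a, OF ai ap dec] by blast
  have "AE x in M. w x = 0"
    by (rule no_fixed[OF wi l1_limit_nonneg[of M a, OF ai ap wi lim]
          contraction_orbit_limit_fixed[of M K a, OF K'(1,3) ai aS wi lim]])
  then have "l1norm M (\<lambda>x. a n x - w x) = l1norm M (a n)" for n
    by (intro l1norm_cong_ae) (use ai wi in \<open>auto simp: ae_eq_def elim!: eventually_mono\<close>)
  then show ?thesis using lim unfolding a_def by simp
qed

definition truncate :: "('a \<Rightarrow> real) \<Rightarrow> ('a \<Rightarrow> real) \<Rightarrow> 'a \<Rightarrow> real" where
  "truncate c u x = max (- c x) (min (c x) (u x))"

lemma integrable_truncate: "integrable M c \<Longrightarrow> integrable M u \<Longrightarrow> integrable M (truncate c u)"
  unfolding truncate_def[abs_def] by (intro integrable_max Bochner_Integration.integrable_min) auto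

lemma truncate_tendsto:
  assumes u: "integrable M u" and v: "integrable M v" and vp: "AE x in M. 0 < v x"
  shows "(\<lambda>m. l1norm M (\<lambda>x. u x - truncate (\<lambda>x. real m * v x) u x)) \<longlonglongrightarrow> 0"
proof -
  have [measurable]: "u \<in> borel_measurable M" "v \<in> borel_measurable M" using u v by auto
  let ?t = "\<lambda>m. truncate (\<lambda>x. real m * v x) u"
  have "(\<lambda>m. integral\<^sup>L M (\<lambda>x. \<bar>u x - ?t m x\<bar>)) \<longlonglongrightarrow> integral\<^sup>L M (\<lambda>x. 0::real)"
  proof (rule integral_dominated_convergence[where w="\<lambda>x. \<bar>u x\<bar>"])
    show "(\<lambda>x. \<bar>u x - ?t m x\<bar>) \<in> borel_measurable M" for m unfolding truncate_def by measurable
    show "AE x in M. (\<lambda>m. \<bar>u x - ?t m x\<bar>) \<longlonglongrightarrow> 0"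
      using vp
    proof (rule eventually_mono)
      fix x assume vx: "0 < v x"
      obtain N :: nat where N: "\<bar>u x\<bar> / v x \<le> real N" using real_arch_simple by blast
      have "\<bar>u x - ?t m x\<bar> = 0" if "m \<ge> N" for m
      proof -
        have "\<bar>u x\<bar> / v x \<le> real m" using N that by linarith
        then have "\<bar>u x\<bar> \<le> real m * v x" using vx by (simp add: field_simps)
        then show ?thesis unfolding truncate_def by (simp add: abs_le_iff max_def min_def)
      qed
      then show "(\<lambda>m. \<bar>u x - ?t m x\<bar>) \<longlonglongrightarrow> 0"
        by (intro tendsto_eventually) (auto simp: eventually_sequentially)
    qed
    show "AE x in M. norm \<bar>u x - ?t m x\<bar> \<le> \<bar>u x\<bar>" for m
      using vp by (rule eventually_mono) (auto simp: truncate_def max_def min_def abs_if)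
  qed (use u in auto)
  then show ?thesis unfolding l1norm_def by simp
qed

lemma positive_op_truncate_le:
  assumes T: "lin_op M T" "positive_op M T"
    and c: "integrable M c" "AE x in M. 0 \<le> c x" and u: "integrable M u"
  shows "l1norm M (T (truncate c u)) \<le> l1norm M (T c)"
proof -
  have ti: "integrable M (truncate c u)" by (rule integrable_truncate[OF c(1) u])
  have up: "AE x in M. T (truncate c u) x \<le> T c x"
    by (rule positive_op_mono[OF T ti c(1)]) (use c(2) in \<open>auto simp: truncate_def elim!: eventually_mono\<close>)
  have lo: "AE x in M. T (\<lambda>x. (- 1) * c x) x \<le> T (truncate c u) x"
    by (rule positive_op_mono[OF T _ ti]) (use c in \<open>auto simp: truncate_def\<close>)
  have "AE x in M. \<bar>T (truncate c u) x\<bar> \<le> \<bar>T c x\<bar>"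
    using up lo lin_op_cmult[OF T(1) c(1), of "- 1"] unfolding ae_eq_def
    by eventually_elim (simp add: abs_le_iff)
  then show ?thesis
    by (intro l1norm_mono_ae) (use lin_op_integrable[OF T(1) ti] lin_op_integrable[OF T(1) c(1)] in auto)
qed

lemma pos_contraction_truncate_split:
  assumes T: "pos_contraction M T"
    and u: "integrable M u" and v: "integrable M v" and vp: "AE x in M. 0 \<le> v x" and c: "c \<ge> 0"
  shows "l1norm M (T u) \<le> l1norm M (\<lambda>x. u x - truncate (\<lambda>x. c * v x) u x) + c * l1norm M (T v)"
proof -
  let ?t = "truncate (\<lambda>x. c * v x) u"
  note L = pos_contractionD[OF T]
  have cv: "integrable M (\<lambda>x. c * v x)" "AE x in M. 0 \<le> c * v x"
    using v vp c by (auto elim!: eventually_mono)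
  have ti: "integrable M ?t" by (rule integrable_truncate[OF cv(1) u])
  have "l1norm M (T u) = l1norm M (\<lambda>x. (T u x - T ?t x) + T ?t x)" by simp
  also have "\<dots> \<le> l1norm M (\<lambda>x. T u x - T ?t x) + l1norm M (T ?t)"
    by (rule l1norm_add_le) (use lin_op_integrable[OF L(1)] u ti in auto)
  also have "l1norm M (\<lambda>x. T u x - T ?t x) \<le> l1norm M (\<lambda>x. u x - ?t x)"
    by (rule contraction_op_diff_le[OF L(1,3) u ti])
  also have "l1norm M (T ?t) \<le> l1norm M (T (\<lambda>x. c * v x))"
    by (rule positive_op_truncate_le[OF L(1,2) cv u])
  also have "\<dots> = c * l1norm M (T v)"
    using l1norm_cong_ae[OF lin_op_integrable[OF L(1) cv(1)] _ lin_op_cmult[OF L(1) v]] v lin_op_integrable[OF L(1) v] c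
    by (simp add: l1norm_cmult)
  finally show ?thesis by simp
qed

lemma funpow_tendsto_0_strictly_positive:
  fixes K :: "('a \<Rightarrow> real) \<Rightarrow> ('a \<Rightarrow> real)"
  assumes K: "pos_contraction M K"
    and Kv0: "(\<lambda>n. l1norm M ((K ^^ n) v)) \<longlonglongrightarrow> 0"
    and v: "integrable M v" and vp: "AE x in M. 0 < v x" and u: "integrable M u"
  shows "(\<lambda>n. l1norm M ((K ^^ n) u)) \<longlonglongrightarrow> 0"
proof (rule LIMSEQ_I)
  fix e :: real assume e: "0 < e"
  have vp': "AE x in M. 0 \<le> v x" using vp by (auto elim!: eventually_mono)
  obtain m where m: "l1norm M (\<lambda>x. u x - truncate (\<lambda>x. real m * v x) u x) < e/2"
    using LIMSEQ_D[OF truncate_tendsto[OF u v vp], of "e/2"] e by auto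
  have "(\<lambda>n. real m * l1norm M ((K ^^ n) v)) \<longlonglongrightarrow> real m * 0" by (intro tendsto_intros Kv0)
  then obtain N where N: "\<forall>n\<ge>N. real m * l1norm M ((K ^^ n) v) < e/2"
    using LIMSEQ_D[of _ "real m * 0" "e/2"] e by force
  show "\<exists>no. \<forall>n\<ge>no. norm (l1norm M ((K ^^ n) u) - 0) < e"
  proof (intro exI allI impI)
    fix n assume "N \<le> n"
    then have "real m * l1norm M ((K ^^ n) v) < e/2" using N by auto
    then show "norm (l1norm M ((K ^^ n) u) - 0) < e"
      using pos_contraction_truncate_split[OF pos_contraction_funpow[OF K] u v vp', of "real m" n] m by simp
  qed
qed

section \<open>Resolvents of positive contraction semigroups\<close>

lemma integrable_neg_indicator_mult:
  fixes f g :: "'a \<Rightarrow> real"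
  assumes "integrable M f" "integrable M g"
  shows "integrable M (\<lambda>x. (if f x < 0 then 1 else 0) * g x)"
proof (rule Bochner_Integration.integrable_bound[OF assms(2)])
  have [measurable]: "f \<in> borel_measurable M" "g \<in> borel_measurable M" using assms by auto
  show "(\<lambda>x. (if f x < 0 then 1 else 0) * g x) \<in> borel_measurable M" by measurable
  show "AE x in M. norm ((if f x < 0 then 1 else 0) * g x) \<le> norm (g x)" by auto
qed

lemma exp_neg_mult_bound:
  fixes lam d :: real assumes lam: "lam > 0" and d: "d > 0"
  shows "d \<le> (1/lam + d) * (1 - exp (- lam * d))"
proof -
  have e1: "1 + lam * d \<le> exp (lam * d)" by (rule exp_ge_add_one_self)
  have pos: "0 < 1 + lam * d" using lam d by (simp add: add_pos_pos mult_pos_pos)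
  have "exp (- lam * d) = 1 / exp (lam * d)" by (simp add: exp_minus field_simps)
  also have "\<dots> \<le> 1 / (1 + lam * d)" using e1 pos by (intro divide_left_mono) auto
  finally have e2: "exp (- lam * d) \<le> 1 / (1 + lam * d)" .
  have "(1/lam + d) * (1 - exp (- lam * d)) \<ge> (1/lam + d) * (1 - 1 / (1 + lam * d))"
    using e2 lam d by (intro mult_left_mono) (auto simp: add_pos_pos)
  also have "(1/lam + d) * (1 - 1 / (1 + lam * d)) = d"
  proof -
    have a: "1 - 1/(1+lam*d) = lam*d/(1+lam*d)" using pos by (simp add: field_simps)
    have b: "1/lam + d = (1+lam*d)/lam" using lam by (simp add: field_simps)
    show ?thesis unfolding a b using pos lam by simp
  qed
  finally show ?thesis by simp
qed

lemma dyadic_refine: "N \<le> N' \<Longrightarrow> real (2 ^ (N' - N)) * (1/2::real) ^ N' = (1/2) ^ N"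
proof -
  assume "N \<le> N'"
  then obtain k where k: "N' = N + k" by (metis le_add_diff_inverse)
  show ?thesis unfolding k by (simp add: power_add field_simps)
qed

lemma dyadic_floor_le:
  fixes h :: real assumes "0 \<le> h"
  shows "real (nat \<lfloor>h * 2^k\<rfloor>) * (1/2)^k \<le> h"
proof -
  have "of_int \<lfloor>h * 2^k\<rfloor> * (1/2::real)^k \<le> (h * 2^k) * (1/2)^k" by (intro mult_right_mono) auto
  then show ?thesis using assms by (simp add: power_one_over field_simps)
qed

lemma dyadic_floor_tendsto:
  fixes h :: real assumes h: "0 \<le> h"
  shows "(\<lambda>k. real (nat \<lfloor>h * 2^k\<rfloor>) * (1/2)^k) \<longlonglongrightarrow> h"
proof (rule tendsto_sandwich[of "\<lambda>k. h - (1/2)^k" _ _ "\<lambda>k. h"])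
  have "(h * 2^k - 1) * (1/2::real)^k \<le> of_int \<lfloor>h * 2^k\<rfloor> * (1/2)^k" for k
    by (intro mult_right_mono) (linarith, simp)
  then show "\<forall>\<^sub>F k in sequentially. h - (1/2)^k \<le> real (nat \<lfloor>h * 2^k\<rfloor>) * (1/2)^k"
    using h by (simp add: power_one_over field_simps)
  show "\<forall>\<^sub>F k in sequentially. real (nat \<lfloor>h * 2^k\<rfloor>) * (1/2)^k \<le> h" using dyadic_floor_le[OF h] by simp
  have "(\<lambda>k. h - (1/2::real)^k) \<longlonglongrightarrow> h - 0" by (intro tendsto_intros) simp
  then show "(\<lambda>k. h - (1/2::real)^k) \<longlonglongrightarrow> h" by simp
qed simp

lemma exp_difference_quotient_tendsto: "((\<lambda>h. (exp (lam * h) - 1) / h) \<longlongrightarrow> (lam::real)) (at_right 0)"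
proof -
  have "((\<lambda>h. exp (lam * h)) has_real_derivative exp (lam * 0) * lam) (at 0)"
    by (auto intro!: derivative_eq_intros)
  then have "((\<lambda>y. (exp (lam * y) - exp (lam * 0)) / (y - 0)) \<longlongrightarrow> lam) (at 0)"
    unfolding has_field_derivative_iff by simp
  then have "((\<lambda>y. (exp (lam * y) - 1) / y) \<longlongrightarrow> lam) (at 0)" by simp
  then show ?thesis by (rule tendsto_mono[OF at_le, rotated]) simp
qed

lemma difference_quotient_identity:
  fixes u s wv c C h lam :: real
  assumes "c * C = 1" "h > 0"
  shows "(s - u) / h - (lam * u - wv) = ((C - 1) / h - lam) * u - (C - 1) * wv - (C / h) * (u - c * s - h * wv)"
proof -
  have "(C / h) * (c * s) = s / h" using assms by (simp add: field_simps)
  then show ?thesis using assms by (simp add: field_simps)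
qed

locale positive_contraction_semigroup =
  fixes M :: "'a measure" and S :: "real \<Rightarrow> ('a \<Rightarrow> real) \<Rightarrow> ('a \<Rightarrow> real)"
    and D :: "('a \<Rightarrow> real) set" and A :: "('a \<Rightarrow> real) \<Rightarrow> ('a \<Rightarrow> real)"
  assumes C0: "C0_semigroup M S"
    and pc: "\<forall>t\<ge>0. positive_op M (S t) \<and> contraction_op M (S t)"
    and gen: "is_generator M S D A"
begin

lemma S_lin_op: "t \<ge> 0 \<Longrightarrow> lin_op M (S t)" using C0 unfolding C0_semigroup_def by auto

lemma S_pos_contraction: "t \<ge> 0 \<Longrightarrow> pos_contraction M (S t)" using pc S_lin_op unfolding pos_contraction_def by auto

lemma S_contraction: "t \<ge> 0 \<Longrightarrow> contraction_op M (S t)" using pc by auto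

lemma S_integrable: "t \<ge> 0 \<Longrightarrow> integrable M f \<Longrightarrow> integrable M (S t f)" using S_lin_op lin_op_integrable by blast

lemma S_zero: "integrable M f \<Longrightarrow> ae_eq M (S 0 f) f" using C0 unfolding C0_semigroup_def L1_def by auto

lemma S_add: "s \<ge> 0 \<Longrightarrow> t \<ge> 0 \<Longrightarrow> integrable M f \<Longrightarrow> ae_eq M (S (s + t) f) (S s (S t f))"
  using C0 unfolding C0_semigroup_def L1_def by auto

lemma S_continuous: "integrable M f \<Longrightarrow> t0 \<ge> 0 \<Longrightarrow>
   ((\<lambda>t. l1norm M (\<lambda>x. S t f x - S t0 f x)) \<longlongrightarrow> 0) (at t0 within {0..})"
  using C0 unfolding C0_semigroup_def L1_def by auto

lemma S_diff_le: "t \<ge> 0 \<Longrightarrow> integrable M f \<Longrightarrow> integrable M g \<Longrightarrow>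
   l1norm M (\<lambda>x. S t f x - S t g x) \<le> l1norm M (\<lambda>x. f x - g x)"
  using contraction_op_diff_le S_lin_op S_contraction by blast

lemma S_norm_le: "t \<ge> 0 \<Longrightarrow> integrable M f \<Longrightarrow> l1norm M (S t f) \<le> l1norm M f"
  using contraction_op_le S_contraction by blast

lemma domain_eq: "D = {f. integrable M f \<and> (\<exists>g. integrable M g \<and>
            ((\<lambda>h. l1norm M (\<lambda>x. (S h f x - f x) / h - g x)) \<longlongrightarrow> 0) (at_right 0))}"
  using gen unfolding is_generator_def L1_def by auto

lemma generator_tendsto: "f \<in> D \<Longrightarrow> integrable M (A f) \<and>
            ((\<lambda>h. l1norm M (\<lambda>x. (S h f x - f x) / h - A f x)) \<longlongrightarrow> 0) (at_right 0)"
  using gen unfolding is_generator_def L1_def by auto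

lemma domain_integrable: "f \<in> D \<Longrightarrow> integrable M f" unfolding domain_eq by auto

lemma S_funpow_pos_contraction: "t \<ge> 0 \<Longrightarrow> pos_contraction M (S t ^^ n)" using pos_contraction_funpow S_pos_contraction by blast

lemma S_funpow_integrable: "d \<ge> 0 \<Longrightarrow> integrable M f \<Longrightarrow> integrable M ((S d ^^ k) f)"
  using S_funpow_pos_contraction lin_op_integrable unfolding pos_contraction_def by blast

lemma S_funpow_lin_op: "d \<ge> 0 \<Longrightarrow> lin_op M (S d ^^ k)"
  using S_funpow_pos_contraction unfolding pos_contraction_def by blast

lemma S_funpow_norm_le: "d \<ge> 0 \<Longrightarrow> integrable M f \<Longrightarrow> l1norm M ((S d ^^ k) f) \<le> l1norm M f"
  using S_funpow_pos_contraction contraction_op_le unfolding pos_contraction_def by blast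

lemma S_funpow_eq:
  assumes d: "d \<ge> 0" and f: "integrable M f"
  shows "ae_eq M ((S d ^^ n) f) (S (real n * d) f)"
proof (induction n)
  case 0 then show ?case using ae_eq_sym[OF S_zero[OF f]] by simp
next
  case (Suc n)
  have i1: "integrable M ((S d ^^ n) f)" using S_funpow_pos_contraction[OF d] f lin_op_integrable unfolding pos_contraction_def by blast
  have "ae_eq M ((S d ^^ Suc n) f) (S d (S (real n * d) f))"
    using lin_op_cong[OF S_lin_op[OF d] i1 S_integrable[OF _ f] Suc.IH] d by simp
  moreover have "ae_eq M (S (d + real n * d) f) (S d (S (real n * d) f))"
    by (rule S_add) (use d f in auto)
  ultimately show ?case
    by (metis ae_eq_sym ae_eq_trans add.commute distrib_left mult.commute mult.right_neutral of_nat_Suc)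
qed

lemma affine_fixpoint_diff_le:
  assumes X: "integrable M X" and Y: "integrable M Y" and B: "integrable M B" and B': "integrable M B'"
    and h: "h \<ge> 0" and c: "0 \<le> c" "c < 1"
    and rX: "ae_eq M X (\<lambda>x. B x + c * S h X x)" and rY: "ae_eq M Y (\<lambda>x. B' x + c * S h Y x)"
  shows "(1 - c) * l1norm M (\<lambda>x. X x - Y x) \<le> l1norm M (\<lambda>x. B x - B' x)"
proof -
  have "l1norm M (\<lambda>x. X x - Y x) = l1norm M (\<lambda>x. (B x - B' x) + c * (S h X x - S h Y x))"
    by (rule l1norm_cong_ae) (use X Y B B' S_integrable[OF h X] S_integrable[OF h Y] rX rY in \<open>auto simp: ae_eq_def algebra_simps elim: eventually_elim2\<close>)
  also have "\<dots> \<le> l1norm M (\<lambda>x. B x - B' x) + l1norm M (\<lambda>x. c * (S h X x - S h Y x))"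
    by (rule l1norm_add_le) (use X Y B B' S_integrable[OF h X] S_integrable[OF h Y] in auto)
  also have "\<dots> \<le> l1norm M (\<lambda>x. B x - B' x) + c * l1norm M (\<lambda>x. X x - Y x)"
    using S_diff_le[OF h X Y] c by (simp add: l1norm_cmult mult_left_mono)
  finally show ?thesis by (simp add: algebra_simps)
qed

lemma generator_lincomb_tendsto:
  assumes f: "f \<in> D" and g: "g \<in> D"
  shows "((\<lambda>h. l1norm M (\<lambda>x. (S h (\<lambda>x. a * f x + b * g x) x - (a * f x + b * g x)) / h
            - (a * A f x + b * A g x))) \<longlongrightarrow> 0) (at_right 0)"
proof -
  let ?F = "\<lambda>x. a * f x + b * g x"
  define Lf where "Lf h = l1norm M (\<lambda>x. (S h f x - f x) / h - A f x)" for h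
  define Lg where "Lg h = l1norm M (\<lambda>x. (S h g x - g x) / h - A g x)" for h
  have fi: "integrable M f" and gi: "integrable M g" using f g by (auto simp: domain_integrable)
  have Af: "integrable M (A f)" "(Lf \<longlongrightarrow> 0) (at_right 0)"
    using generator_tendsto[OF f] unfolding Lf_def by auto
  have Ag: "integrable M (A g)" "(Lg \<longlongrightarrow> 0) (at_right 0)"
    using generator_tendsto[OF g] unfolding Lg_def by auto
  have le: "l1norm M (\<lambda>x. (S h ?F x - ?F x) / h - (a * A f x + b * A g x)) \<le> \<bar>a\<bar> * Lf h + \<bar>b\<bar> * Lg h"
    if h: "h > 0" for h
  proof -
    have iS: "integrable M (S h f)" "integrable M (S h g)" using S_integrable fi gi h by auto
    have "ae_eq M (S h ?F) (\<lambda>x. a * S h f x + b * S h g x)"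
      by (rule lin_op_lincomb[OF S_lin_op fi gi]) (use h in auto)
    then have "ae_eq M (\<lambda>x. (S h ?F x - ?F x) / h - (a * A f x + b * A g x))
        (\<lambda>x. a * ((S h f x - f x) / h - A f x) + b * ((S h g x - g x) / h - A g x))"
      unfolding ae_eq_def by (auto elim!: eventually_mono simp: diff_divide_distrib add_divide_distrib algebra_simps)
    then have "l1norm M (\<lambda>x. (S h ?F x - ?F x) / h - (a * A f x + b * A g x))
        = l1norm M (\<lambda>x. a * ((S h f x - f x) / h - A f x) + b * ((S h g x - g x) / h - A g x))"
      by (rule l1norm_cong_ae[rotated 2]) (use S_integrable[of h ?F] iS fi gi Af Ag h in auto)
    also have "\<dots> \<le> \<bar>a\<bar> * Lf h + \<bar>b\<bar> * Lg h"
      using l1norm_add_le[of M "\<lambda>x. a * ((S h f x - f x) / h - A f x)" "\<lambda>x. b * ((S h g x - g x) / h - A g x)"]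
        iS fi gi Af Ag unfolding Lf_def Lg_def by (auto simp: l1norm_cmult)
    finally show ?thesis .
  qed
  have "((\<lambda>h. \<bar>a\<bar> * Lf h + \<bar>b\<bar> * Lg h) \<longlongrightarrow> \<bar>a\<bar> * 0 + \<bar>b\<bar> * 0) (at_right 0)"
    by (intro tendsto_intros Af Ag)
  then have upper: "((\<lambda>h. \<bar>a\<bar> * Lf h + \<bar>b\<bar> * Lg h) \<longlongrightarrow> 0) (at_right 0)" by simp
  show ?thesis
    by (rule tendsto_sandwich[OF _ _ tendsto_const upper])
       (use eventually_at_right_less[of 0] le in \<open>auto elim!: eventually_mono\<close>)
qed

lemma domain_lincomb:
  assumes f: "f \<in> D" and g: "g \<in> D"
  shows "(\<lambda>x. a * f x + b * g x) \<in> D \<and> ae_eq M (A (\<lambda>x. a * f x + b * g x)) (\<lambda>x. a * A f x + b * A g x)"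
proof -
  let ?F = "\<lambda>x. a * f x + b * g x" and ?G = "\<lambda>x. a * A f x + b * A g x"
  note lim = generator_lincomb_tendsto[OF f g, of a b]
  have Fi: "integrable M ?F" and Gi: "integrable M ?G"
    using f g generator_tendsto[OF f] generator_tendsto[OF g] by (auto simp: domain_integrable)
  have FD: "?F \<in> D" unfolding domain_eq using Fi Gi lim by blast
  have AF: "integrable M (A ?F)" "((\<lambda>h. l1norm M (\<lambda>x. (S h ?F x - ?F x) / h - A ?F x)) \<longlongrightarrow> 0) (at_right 0)"
    using generator_tendsto[OF FD] by auto
  have "ae_eq M (A ?F) ?G"
    by (rule l1_limit_unique[OF trivial_limit_at_right_real AF(1) Gi _ AF(2) lim])
       (use Fi S_integrable[of _ ?F] eventually_at_right_less[of 0] in \<open>auto elim!: eventually_mono\<close>)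
  then show ?thesis using FD by auto
qed

lemma domain_uminus: "f \<in> D \<Longrightarrow> (\<lambda>x. - f x) \<in> D \<and> ae_eq M (A (\<lambda>x. - f x)) (\<lambda>x. - A f x)"
  using domain_lincomb[of f f "-1" 0] by simp

lemma domain_diff: "f \<in> D \<Longrightarrow> g \<in> D \<Longrightarrow> (\<lambda>x. f x - g x) \<in> D \<and> ae_eq M (A (\<lambda>x. f x - g x)) (\<lambda>x. A f x - A g x)"
  using domain_lincomb[of f g 1 "-1"] by simp

lemma generator_ae_zero:
  assumes f: "f \<in> D" and z: "AE x in M. f x = 0"
  shows "AE x in M. A f x = 0"
proof -
  have fi: "integrable M f" using f by (rule domain_integrable)
  have Af: "integrable M (A f)" "((\<lambda>h. l1norm M (\<lambda>x. (S h f x - f x) / h - A f x)) \<longlongrightarrow> 0) (at_right 0)"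
    using generator_tendsto[OF f] by auto
  have "ae_eq M (A f) (\<lambda>x. 0)"
  proof (rule l1_limit_unique[OF trivial_limit_at_right_real Af(1) _ _ Af(2)])
    show "integrable M (\<lambda>x. 0::real)" by simp
    show "\<forall>\<^sub>F h in at_right 0. integrable M (\<lambda>x. (S h f x - f x) / h)"
      using eventually_at_right_less[of 0] by (rule eventually_mono) (use S_integrable[of _ f] fi in auto)
    have "\<forall>\<^sub>F h in at_right 0. l1norm M (\<lambda>x. (S h f x - f x) / h - 0) = 0"
      using eventually_at_right_less[of 0]
    proof (rule eventually_mono)
      fix h :: real assume h: "0 < h"
      have "AE x in M. S h f x = 0" by (rule lin_op_ae_zero[OF S_lin_op fi z]) (use h in auto)
      then show "l1norm M (\<lambda>x. (S h f x - f x) / h - 0) = 0"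
        using z S_integrable[of h f] fi h by (subst l1norm_eq_0_iff) (auto elim: eventually_elim2)
    qed
    then show "((\<lambda>h. l1norm M (\<lambda>x. (S h f x - f x) / h - 0)) \<longlongrightarrow> 0) (at_right 0)"
      by (rule tendsto_eventually)
  qed
  then show ?thesis unfolding ae_eq_def .
qed

lemma neg_indicator_difference_quotient_nonneg:
  assumes fi: "integrable M f" and h: "h > 0"
  shows "0 \<le> (\<integral>x. (if f x < 0 then 1 else 0) * ((S h f x - f x) / h) \<partial>M)"
proof -
  define chi where "chi x = (if f x < 0 then 1 else (0::real))" for x
  define fm where "fm x = max (- f x) 0" for x
  define fp where "fp x = max (f x) 0" for x
  have h0: "h \<ge> 0" using h by simp
  have fmi: "integrable M fm" unfolding fm_def[abs_def] using fi by (intro integrable_max) auto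
  have fpi: "integrable M fp" unfolding fp_def[abs_def] using fi by (intro integrable_max) auto
  have fpm: "(\<lambda>x. fp x - fm x) = f" unfolding fp_def fm_def by (rule ext) auto
  have chi_f: "chi x * f x = - fm x" for x unfolding chi_def fm_def by auto
  have ci: "integrable M (\<lambda>x. chi x * g x)" if "integrable M g" for g
    unfolding chi_def using integrable_neg_indicator_mult[OF fi that] .
  have a: "ae_eq M (S h (\<lambda>x. fp x - fm x)) (\<lambda>x. S h fp x - S h fm x)" by (rule lin_op_diff[OF S_lin_op[OF h0] fpi fmi])
  have b: "AE x in M. 0 \<le> S h fp x" "AE x in M. 0 \<le> S h fm x"
    using positive_op_nonneg[of M "S h" fp] positive_op_nonneg[of M "S h" fm] pc h0 fpi fmi unfolding fp_def fm_def by auto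
  have "AE x in M. - S h fm x \<le> chi x * S h f x"
    using a b unfolding fpm ae_eq_def by eventually_elim (auto simp: chi_def)
  then have "(\<integral>x. chi x * S h f x \<partial>M) \<ge> (\<integral>x. - S h fm x \<partial>M)"
    by (rule integral_mono_AE[rotated 2]) (use ci S_integrable[OF h0 fmi] S_integrable[OF h0 fi] in auto)
  moreover have "(\<integral>x. S h fm x \<partial>M) \<le> (\<integral>x. fm x \<partial>M)"
  proof -
    have "(\<integral>x. S h fm x \<partial>M) = l1norm M (S h fm)"
      by (rule l1norm_eq_integral[symmetric]) (use b S_integrable[OF h0 fmi] in auto)
    also have "\<dots> \<le> l1norm M fm" by (rule S_norm_le[OF h0 fmi])
    also have "\<dots> = (\<integral>x. fm x \<partial>M)" by (rule l1norm_eq_integral) (use fmi in \<open>auto simp: fm_def\<close>)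
    finally show ?thesis .
  qed
  ultimately have "(\<integral>x. chi x * S h f x \<partial>M) - (\<integral>x. chi x * f x \<partial>M) \<ge> 0"
    unfolding chi_f by simp
  then have "(\<integral>x. (chi x * S h f x - chi x * f x) / h \<partial>M) \<ge> 0"
    using ci[OF S_integrable[OF h0 fi]] ci[OF fi] h by simp
  then show ?thesis unfolding chi_def by (simp add: algebra_simps diff_divide_distrib)
qed

lemma generator_dissipative:
  assumes f: "f \<in> D"
  shows "0 \<le> (\<integral>x. (if f x < 0 then 1 else 0) * A f x \<partial>M)"
proof -
  define chi where "chi x = (if f x < 0 then 1 else (0::real))" for x
  define Q where "Q h = (\<integral>x. chi x * ((S h f x - f x) / h) \<partial>M)" for h
  define I where "I = (\<integral>x. chi x * A f x \<partial>M)"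
  define L where "L h = l1norm M (\<lambda>x. (S h f x - f x) / h - A f x)" for h
  have fi: "integrable M f" using f by (rule domain_integrable)
  have Af: "integrable M (A f)" "(L \<longlongrightarrow> 0) (at_right 0)"
    using generator_tendsto[OF f] unfolding L_def by auto
  have ci: "integrable M (\<lambda>x. chi x * g x)" if "integrable M g" for g
    unfolding chi_def using integrable_neg_indicator_mult[OF fi that] .
  have diff: "\<bar>Q h - I\<bar> \<le> L h" if h: "h > 0" for h
  proof -
    have i1: "integrable M (\<lambda>x. (S h f x - f x) / h)" using S_integrable[of h f] fi h by auto
    have "Q h - I = (\<integral>x. chi x * ((S h f x - f x) / h - A f x) \<partial>M)"
      unfolding Q_def I_def using ci[OF i1] ci[OF Af(1)] by (simp add: algebra_simps)
    also have "\<bar>\<dots>\<bar> \<le> l1norm M (\<lambda>x. chi x * ((S h f x - f x) / h - A f x))" by (rule abs_integral_le_l1norm)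
    also have "\<dots> \<le> L h" unfolding L_def
      by (rule l1norm_mono_ae) (use i1 Af(1) ci[of "\<lambda>x. (S h f x - f x) / h - A f x"] in \<open>auto simp: chi_def\<close>)
    finally show ?thesis .
  qed
  have "((\<lambda>h. Q h - I) \<longlongrightarrow> 0) (at_right 0)"
  proof (rule tendsto_sandwich[of "\<lambda>h. - L h" _ _ "L"])
    show "\<forall>\<^sub>F h in at_right 0. - L h \<le> Q h - I" "\<forall>\<^sub>F h in at_right 0. Q h - I \<le> L h"
      using eventually_at_right_less[of 0] by (auto elim!: eventually_mono dest!: diff)
    show "((\<lambda>h. - L h) \<longlongrightarrow> 0) (at_right 0)" using tendsto_minus[OF Af(2)] by simp
  qed (rule Af(2))
  then have "(Q \<longlongrightarrow> I) (at_right 0)" by (simp add: LIM_zero_iff)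
  then have "0 \<le> I"
    by (rule tendsto_lowerbound)
       (use eventually_at_right_less[of 0] neg_indicator_difference_quotient_nonneg[OF fi]
         in \<open>auto elim!: eventually_mono simp: Q_def chi_def\<close>)
  then show ?thesis unfolding I_def chi_def .
qed

end

locale laplace_resolvent = positive_contraction_semigroup +
  fixes lam :: real
  assumes lam_pos: "lam > 0"
begin

definition laplace_term :: "real \<Rightarrow> ('a \<Rightarrow> real) \<Rightarrow> nat \<Rightarrow> 'a \<Rightarrow> real" where
  "laplace_term d w k x = d * exp (- lam * d) ^ k * (S d ^^ k) w x"

definition laplace_sum :: "real \<Rightarrow> ('a \<Rightarrow> real) \<Rightarrow> 'a \<Rightarrow> real" where
  "laplace_sum d w x = (\<Sum>k. laplace_term d w k x)"

lemma laplace_term_integrable: "d \<ge> 0 \<Longrightarrow> integrable M w \<Longrightarrow> integrable M (laplace_term d w k)"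
  unfolding laplace_term_def[abs_def] using S_funpow_integrable by auto

lemma laplace_term_norm_le: "d \<ge> 0 \<Longrightarrow> integrable M w \<Longrightarrow> l1norm M (laplace_term d w k) \<le> d * exp (- lam * d) ^ k * l1norm M w"
proof -
  assume a: "d \<ge> 0" "integrable M w"
  have "l1norm M (laplace_term d w k) = \<bar>d * exp (- lam * d) ^ k\<bar> * l1norm M ((S d ^^ k) w)"
    unfolding laplace_term_def[abs_def] by (rule l1norm_cmult)
  also have "\<dots> \<le> \<bar>d * exp (- lam * d) ^ k\<bar> * l1norm M w"
    using S_funpow_norm_le[OF a] by (intro mult_left_mono) auto
  finally show ?thesis using a by simp
qed

lemma laplace_term_summable: "d > 0 \<Longrightarrow> integrable M w \<Longrightarrow> summable (\<lambda>k. l1norm M (laplace_term d w k))"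
proof -
  assume a: "d > 0" "integrable M w"
  have q: "exp (- lam * d) < 1" using a lam_pos by (simp add: mult_pos_pos)
  have "summable (\<lambda>k. d * l1norm M w * exp (- lam * d) ^ k)"
    by (rule summable_mult) (use q in \<open>auto intro: summable_geometric\<close>)
  then show ?thesis
    by (rule summable_comparison_test[rotated]) (use laplace_term_norm_le[of d w] a in \<open>auto simp: algebra_simps\<close>)
qed

lemma laplace_sum_integrable: "d > 0 \<Longrightarrow> integrable M w \<Longrightarrow> integrable M (laplace_sum d w)"
  unfolding laplace_sum_def[abs_def] using integrable_l1_series[OF laplace_term_integrable laplace_term_summable] by auto

lemma laplace_sum_tendsto: "d > 0 \<Longrightarrow> integrable M w \<Longrightarrow>
   (\<lambda>n. l1norm M (\<lambda>x. (\<Sum>k<n. laplace_term d w k x) - laplace_sum d w x)) \<longlonglongrightarrow> 0"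
  unfolding laplace_sum_def using l1_series_tendsto[OF laplace_term_integrable laplace_term_summable] by auto

lemma laplace_partial_sum_Suc:
  assumes d: "d \<ge> 0" and w: "integrable M w"
  shows "ae_eq M (\<lambda>x. d * w x + exp (- lam * d) * S d (\<lambda>x. \<Sum>k<n. laplace_term d w k x) x)
                 (\<lambda>x. \<Sum>k<Suc n. laplace_term d w k x)"
proof -
  let ?e = "exp (- lam * d)"
  have "ae_eq M (S d (\<lambda>x. \<Sum>k<n. laplace_term d w k x)) (\<lambda>x. \<Sum>k<n. S d (laplace_term d w k) x)"
    by (rule lin_op_sum[OF S_lin_op[OF d]]) (rule laplace_term_integrable[OF d w])
  moreover have "ae_eq M (\<lambda>x. \<Sum>k<n. S d (laplace_term d w k) x) (\<lambda>x. \<Sum>k<n. d * ?e ^ k * (S d ^^ Suc k) w x)"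
  proof (rule ae_eq_sum)
    fix k
    have "ae_eq M (S d (\<lambda>x. (d * ?e ^ k) * (S d ^^ k) w x)) (\<lambda>x. (d * ?e ^ k) * S d ((S d ^^ k) w) x)"
      by (rule lin_op_cmult[OF S_lin_op[OF d] S_funpow_integrable[OF d w]])
    then show "ae_eq M (S d (laplace_term d w k)) (\<lambda>x. d * ?e ^ k * (S d ^^ Suc k) w x)"
      unfolding laplace_term_def[abs_def] by simp
  qed
  ultimately have "ae_eq M (S d (\<lambda>x. \<Sum>k<n. laplace_term d w k x)) (\<lambda>x. \<Sum>k<n. d * ?e ^ k * (S d ^^ Suc k) w x)"
    by (rule ae_eq_trans)
  moreover have "d * w x + ?e * (\<Sum>k<n. d * ?e ^ k * (S d ^^ Suc k) w x) = (\<Sum>k<Suc n. laplace_term d w k x)" for x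
    unfolding laplace_term_def
    by (subst sum.lessThan_Suc_shift) (simp add: sum_distrib_left algebra_simps)
  ultimately show ?thesis unfolding ae_eq_def by (auto elim!: eventually_mono)
qed

lemma laplace_sum_fixpoint:
  assumes d: "d > 0" and w: "integrable M w"
  shows "ae_eq M (laplace_sum d w) (\<lambda>x. d * w x + exp (- lam * d) * S d (laplace_sum d w) x)"
proof -
  let ?e = "exp (- lam * d)" and ?U = "laplace_sum d w"
  define P where "P n x = (\<Sum>k<n. laplace_term d w k x)" for n x
  define Y where "Y n x = d * w x + ?e * S d (P n) x" for n x
  have d0: "d \<ge> 0" using d by simp
  have Pint: "integrable M (P n)" for n unfolding P_def[abs_def] using laplace_term_integrable[OF d0 w] by auto
  have UI: "integrable M ?U" by (rule laplace_sum_integrable[OF d w])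
  have Yint: "integrable M (Y n)" for n unfolding Y_def[abs_def] using w S_integrable[OF d0 Pint] by auto
  note P_lim = laplace_sum_tendsto[OF d w, folded P_def]
  show ?thesis
  proof (rule l1_limit_unique[of sequentially _ _ _ Y])
    show "integrable M (\<lambda>x. d * w x + ?e * S d ?U x)" using w S_integrable[OF d0 UI] by auto
    have YP: "ae_eq M (Y n) (P (Suc n))" for n
      using laplace_partial_sum_Suc[OF d0 w, of n] unfolding ae_eq_def Y_def P_def by simp
    have "l1norm M (\<lambda>x. Y n x - ?U x) = l1norm M (\<lambda>x. P (Suc n) x - ?U x)" for n
      by (rule l1norm_cong_ae) (use Yint Pint UI YP in \<open>auto simp: ae_eq_def elim!: eventually_mono\<close>)
    then show "(\<lambda>n. l1norm M (\<lambda>x. Y n x - ?U x)) \<longlonglongrightarrow> 0"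
      using LIMSEQ_Suc[OF P_lim] by simp
    have le: "l1norm M (\<lambda>x. Y n x - (d * w x + ?e * S d ?U x)) \<le> l1norm M (\<lambda>x. P n x - ?U x)" for n
    proof -
      have "l1norm M (\<lambda>x. Y n x - (d * w x + ?e * S d ?U x)) = l1norm M (\<lambda>x. ?e * (S d (P n) x - S d ?U x))"
        unfolding Y_def by (simp add: algebra_simps)
      also have "\<dots> = ?e * l1norm M (\<lambda>x. S d (P n) x - S d ?U x)" by (subst l1norm_cmult) simp
      also have "\<dots> \<le> 1 * l1norm M (\<lambda>x. P n x - ?U x)"
        using S_diff_le[OF d0 Pint UI] lam_pos d by (intro mult_mono) (auto simp: mult_pos_pos)
      finally show ?thesis by simp
    qed
    show "(\<lambda>n. l1norm M (\<lambda>x. Y n x - (d * w x + ?e * S d ?U x))) \<longlonglongrightarrow> 0"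
      by (rule tendsto_sandwich[rotated 2, OF tendsto_const P_lim]) (use le in auto)
  qed (use UI Yint in auto)
qed

lemma laplace_sum_iterate:
  assumes d: "d > 0" and w: "integrable M w"
  shows "ae_eq M (laplace_sum d w) (\<lambda>x. d * (\<Sum>j<n. exp (- lam * d) ^ j * (S d ^^ j) w x) + exp (- lam * d) ^ n * (S d ^^ n) (laplace_sum d w) x)"
proof (induction n)
  case 0 then show ?case by (simp add: ae_eq_refl)
next
  case (Suc n)
  let ?e = "exp (- lam * d)"
  have d0: "d \<ge> 0" using d by simp
  have UI: "integrable M (laplace_sum d w)" by (rule laplace_sum_integrable[OF d w])
  have h1: "ae_eq M ((S d ^^ n) (laplace_sum d w)) ((S d ^^ n) (\<lambda>x. d * w x + ?e * S d (laplace_sum d w) x))"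
    by (rule lin_op_cong[OF S_funpow_lin_op[OF d0] UI _ laplace_sum_fixpoint[OF d w]]) (use w S_integrable[OF d0 UI] in auto)
  have h2: "ae_eq M ((S d ^^ n) (\<lambda>x. d * w x + ?e * S d (laplace_sum d w) x)) (\<lambda>x. d * (S d ^^ n) w x + ?e * (S d ^^ n) (S d (laplace_sum d w)) x)"
    by (rule lin_op_lincomb[OF S_funpow_lin_op[OF d0] w S_integrable[OF d0 UI]])
  have h3: "(S d ^^ n) (S d (laplace_sum d w)) = (S d ^^ Suc n) (laplace_sum d w)" by (simp only: funpow_Suc_right o_apply)
  have "ae_eq M ((S d ^^ n) (laplace_sum d w)) (\<lambda>x. d * (S d ^^ n) w x + ?e * (S d ^^ Suc n) (laplace_sum d w) x)"
    using ae_eq_trans[OF h1 h2] h3 by simp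
  with Suc.IH show ?case unfolding ae_eq_def
    by (auto elim!: eventually_elim2 simp: algebra_simps)
qed

lemma laplace_sum_iterate_time:
  assumes w: "integrable M w" and d: "d > 0"
  shows "ae_eq M (laplace_sum d w) (\<lambda>x. d * (\<Sum>j<n. exp (- lam * d) ^ j * (S d ^^ j) w x)
            + exp (- lam * (real n * d)) * S (real n * d) (laplace_sum d w) x)"
proof -
  have d0: "d \<ge> 0" using d by simp
  have e: "exp (- lam * d) ^ n = exp (- lam * (real n * d))" by (simp add: exp_of_nat_mult[symmetric] algebra_simps)
  show ?thesis
    using laplace_sum_iterate[OF d w, of n] S_funpow_eq[OF d0 laplace_sum_integrable[OF d w], of n] unfolding ae_eq_def e
    by (auto elim: eventually_elim2)
qed

lemma damped_orbit_tendsto: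
  assumes w: "integrable M w"
  shows "((\<lambda>s. l1norm M (\<lambda>x. exp (- lam * s) * S s w x - w x)) \<longlongrightarrow> 0) (at 0 within {0..})"
proof -
  define g where "g s = exp (- lam * s) * l1norm M (\<lambda>x. S s w x - S 0 w x) + \<bar>exp (- lam * s) - 1\<bar> * l1norm M (S 0 w)" for s
  have le: "l1norm M (\<lambda>x. exp (- lam * s) * S s w x - w x) \<le> g s" if s: "s \<ge> 0" for s
  proof -
    have "l1norm M (\<lambda>x. exp (- lam * s) * S s w x - w x) = l1norm M (\<lambda>x. exp (- lam * s) * S s w x - S 0 w x)"
      by (rule l1norm_cong_ae) (use w S_integrable[OF s w] S_integrable[of 0 w] S_zero[OF w] in \<open>auto simp: ae_eq_def elim!: eventually_mono\<close>)
    also have "\<dots> = l1norm M (\<lambda>x. exp (- lam * s) * (S s w x - S 0 w x) + (exp (- lam * s) - 1) * S 0 w x)"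
      by (simp add: algebra_simps)
    also have "\<dots> \<le> l1norm M (\<lambda>x. exp (- lam * s) * (S s w x - S 0 w x)) + l1norm M (\<lambda>x. (exp (- lam * s) - 1) * S 0 w x)"
      by (rule l1norm_add_le) (use w S_integrable[OF s w] S_integrable[of 0 w] in auto)
    also have "\<dots> = g s" unfolding g_def l1norm_cmult by simp
    finally show ?thesis .
  qed
  have "(g \<longlongrightarrow> exp (- lam * 0) * 0 + \<bar>exp (- lam * 0) - 1\<bar> * l1norm M (S 0 w)) (at 0 within {0..})"
    unfolding g_def by (intro tendsto_intros S_continuous[OF w]) auto
  then have g0: "(g \<longlongrightarrow> 0) (at 0 within {0..})" by simp
  show ?thesis
    by (rule tendsto_sandwich[OF _ _ tendsto_const g0]) (use le in \<open>auto simp: eventually_at_filter\<close>)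
qed

lemma damped_orbit_near_0:
  assumes w: "integrable M w" and eta: "\<eta> > 0"
  shows "\<exists>h0>0. \<forall>s. 0 \<le> s \<and> s \<le> h0 \<longrightarrow> l1norm M (\<lambda>x. exp (- lam * s) * S s w x - w x) \<le> \<eta>"
proof -
  define f where "f s = l1norm M (\<lambda>x. exp (- lam * s) * S s w x - w x)" for s
  have "\<forall>\<^sub>F s in at 0 within {0..}. f s < \<eta>"
    using order_tendstoD(2)[OF damped_orbit_tendsto[OF w] eta] unfolding f_def .
  then obtain d where d: "d > 0" and dd: "\<And>s. s \<in> {0..} \<Longrightarrow> s \<noteq> 0 \<Longrightarrow> dist s 0 < d \<Longrightarrow> f s < \<eta>"
    unfolding eventually_at by auto
  have "f 0 = l1norm M (\<lambda>x. S 0 w x - w x)" unfolding f_def by simp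
  also have "\<dots> = 0" using S_zero[OF w] S_integrable[of 0 w] w
    by (subst l1norm_eq_0_iff) (auto simp: ae_eq_def elim!: eventually_mono)
  finally have "f 0 = 0" .
  then have "f s \<le> \<eta>" if "0 \<le> s" "s \<le> d / 2" for s
    using dd[of s] that d eta by (cases "s = 0") (auto simp: dist_real_def)
  then show ?thesis using d unfolding f_def by (intro exI[of _ "d/2"]) auto
qed

lemma laplace_partial_sum_near:
  assumes w: "integrable M w" and d: "d > 0"
    and h0: "\<forall>s. 0 \<le> s \<and> s \<le> h0 \<longrightarrow> l1norm M (\<lambda>x. exp (- lam * s) * S s w x - w x) \<le> \<eta>"
    and nd: "real n * d \<le> h0"
  shows "l1norm M (\<lambda>x. d * (\<Sum>j<n. exp (- lam * d) ^ j * (S d ^^ j) w x) - real n * d * w x) \<le> real n * d * \<eta>"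
proof -
  have d0: "d \<ge> 0" using d by simp
  have "l1norm M (\<lambda>x. d * (\<Sum>j<n. exp (- lam * d) ^ j * (S d ^^ j) w x) - real n * d * w x)
      = l1norm M (\<lambda>x. \<Sum>j<n. d * (exp (- lam * d) ^ j * (S d ^^ j) w x - w x))"
    by (simp add: sum_distrib_left sum_subtractf algebra_simps)
  also have "\<dots> \<le> (\<Sum>j<n. l1norm M (\<lambda>x. d * (exp (- lam * d) ^ j * (S d ^^ j) w x - w x)))"
    by (rule l1norm_sum_le) (use w S_funpow_integrable[OF d0 w] in auto)
  also have "\<dots> \<le> (\<Sum>j<n. d * \<eta>)"
  proof (rule sum_mono)
    fix j assume j: "j \<in> {..<n}"
    have jd: "0 \<le> real j * d \<and> real j * d \<le> h0" using j nd d
      by (auto intro: order_trans[rotated] mult_right_mono)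
    have "l1norm M (\<lambda>x. exp (- lam * d) ^ j * (S d ^^ j) w x - w x)
        = l1norm M (\<lambda>x. exp (- lam * (real j * d)) * S (real j * d) w x - w x)"
    proof (rule l1norm_cong_ae)
      show "integrable M (\<lambda>x. exp (- lam * d) ^ j * (S d ^^ j) w x - w x)" using w S_funpow_integrable[OF d0 w] by auto
      show "integrable M (\<lambda>x. exp (- lam * (real j * d)) * S (real j * d) w x - w x)" using w S_integrable[of "real j * d" w] d by auto
      have e: "exp (- lam * d) ^ j = exp (- lam * (real j * d))" by (simp add: exp_of_nat_mult[symmetric] algebra_simps)
      show "ae_eq M (\<lambda>x. exp (- lam * d) ^ j * (S d ^^ j) w x - w x) (\<lambda>x. exp (- lam * (real j * d)) * S (real j * d) w x - w x)"
        using S_funpow_eq[OF d0 w, of j] unfolding ae_eq_def e by (auto elim!: eventually_mono)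
    qed
    also have "\<dots> \<le> \<eta>" using h0 jd by blast
    finally show "l1norm M (\<lambda>x. d * (exp (- lam * d) ^ j * (S d ^^ j) w x - w x)) \<le> d * \<eta>"
      using d by (simp add: l1norm_cmult mult_left_mono)
  qed
  also have "\<dots> = real n * d * \<eta>" by simp
  finally show ?thesis .
qed

definition dyadic_laplace :: "('a \<Rightarrow> real) \<Rightarrow> nat \<Rightarrow> 'a \<Rightarrow> real" where
  "dyadic_laplace w N = laplace_sum ((1/2)^N) w"

lemma dyadic_laplace_integrable: "integrable M w \<Longrightarrow> integrable M (dyadic_laplace w N)"
  unfolding dyadic_laplace_def by (rule laplace_sum_integrable) auto

text \<open>With d = 2^-N, the coarse sum satisfies X = d w + e^(-lam d) S(d) X and the finer one the same
  equation with d w replaced by a Riemann sum over [0, d]. Comparing the two fixed-point equations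
  costs a factor 1/(1 - e^(-lam d)) \<le> (1/lam + d)/d.\<close>
lemma dyadic_laplace_cauchy:
  assumes w: "integrable M w"
    and h0: "\<forall>s. 0 \<le> s \<and> s \<le> h0 \<longrightarrow> l1norm M (\<lambda>x. exp (- lam * s) * S s w x - w x) \<le> \<eta>"
    and N: "(1/2)^N \<le> h0" and NN: "N \<le> N'" and eta: "\<eta> \<ge> 0"
  shows "l1norm M (\<lambda>x. dyadic_laplace w N' x - dyadic_laplace w N x) \<le> \<eta> * (1/lam + 1)"
proof -
  define d where "d = (1/2::real)^N"
  define d' where "d' = (1/2::real)^N'"
  define n where "n = (2::nat) ^ (N' - N)"
  have nd: "real n * d' = d" unfolding n_def d_def d'_def using dyadic_refine[OF NN] by simp
  have dpos: "d > 0" "d' > 0" unfolding d_def d'_def by auto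
  have d1: "d \<le> 1" unfolding d_def by (simp add: power_le_one)
  define B where "B x = d' * (\<Sum>j<n. exp (- lam * d') ^ j * (S d' ^^ j) w x)" for x
  have BI: "integrable M B" unfolding B_def[abs_def] using w S_funpow_integrable[of d' w] dpos by auto
  have rX: "ae_eq M (dyadic_laplace w N') (\<lambda>x. B x + exp (- lam * d) * S d (dyadic_laplace w N') x)"
    using laplace_sum_iterate_time[OF w dpos(2), of n] unfolding dyadic_laplace_def B_def[abs_def] nd d'_def[symmetric] by simp
  have rY: "ae_eq M (dyadic_laplace w N) (\<lambda>x. d * w x + exp (- lam * d) * S d (dyadic_laplace w N) x)"
    using laplace_sum_fixpoint[OF dpos(1) w] unfolding dyadic_laplace_def d_def by simp
  have EB: "l1norm M (\<lambda>x. B x - d * w x) \<le> d * \<eta>"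
    using laplace_partial_sum_near[OF w dpos(2) h0, of n] nd N unfolding B_def d_def by simp
  have c: "0 \<le> exp (- lam * d)" "exp (- lam * d) < 1" using lam_pos dpos by (auto simp: mult_pos_pos)
  have "(1 - exp (- lam * d)) * l1norm M (\<lambda>x. dyadic_laplace w N' x - dyadic_laplace w N x) \<le> l1norm M (\<lambda>x. B x - d * w x)"
    by (rule affine_fixpoint_diff_le[OF dyadic_laplace_integrable[OF w] dyadic_laplace_integrable[OF w] BI _ _ c rX rY]) (use w dpos in auto)
  also have "\<dots> \<le> d * \<eta>" by (rule EB)
  finally have 1: "(1 - exp (- lam * d)) * l1norm M (\<lambda>x. dyadic_laplace w N' x - dyadic_laplace w N x) \<le> d * \<eta>" .
  have 2: "d \<le> (1/lam + d) * (1 - exp (- lam * d))" by (rule exp_neg_mult_bound[OF lam_pos dpos(1)])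
  have "d * l1norm M (\<lambda>x. dyadic_laplace w N' x - dyadic_laplace w N x) \<le> (1/lam + d) * (1 - exp (- lam * d)) * l1norm M (\<lambda>x. dyadic_laplace w N' x - dyadic_laplace w N x)"
    using 2 by (intro mult_right_mono) auto
  also have "\<dots> \<le> (1/lam + d) * (d * \<eta>)"
    using 1 lam_pos dpos by (simp only: mult.assoc) (intro mult_left_mono, auto)
  finally have "d * l1norm M (\<lambda>x. dyadic_laplace w N' x - dyadic_laplace w N x) \<le> d * ((1/lam + d) * \<eta>)" by (simp add: algebra_simps)
  then have "l1norm M (\<lambda>x. dyadic_laplace w N' x - dyadic_laplace w N x) \<le> (1/lam + d) * \<eta>" using dpos by simp
  also have "\<dots> \<le> (1/lam + 1) * \<eta>" using d1 eta by (intro mult_right_mono) auto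
  finally show ?thesis by (simp add: algebra_simps)
qed

lemma dyadic_laplace_convergent:
  assumes w: "integrable M w"
  shows "\<exists>F. integrable M F \<and> (\<lambda>n. l1norm M (\<lambda>x. dyadic_laplace w n x - F x)) \<longlonglongrightarrow> 0"
proof (rule l1_cauchy_convergent)
  show "\<And>n. integrable M (dyadic_laplace w n)" using dyadic_laplace_integrable[OF w] .
  fix e :: real assume e: "e > 0"
  define \<eta> where "\<eta> = e / (4 * (1/lam + 1))"
  have eta: "\<eta> > 0" unfolding \<eta>_def using e lam_pos by (simp add: add_pos_pos)
  obtain h0 where h0p: "h0 > 0" and h0: "\<forall>s. 0 \<le> s \<and> s \<le> h0 \<longrightarrow> l1norm M (\<lambda>x. exp (- lam * s) * S s w x - w x) \<le> \<eta>"
    using damped_orbit_near_0[OF w eta] by auto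
  obtain N where N: "(1/2::real)^N < h0" using real_arch_pow_inv[OF h0p, of "1/2"] by auto
  show "\<exists>N. \<forall>m\<ge>N. \<forall>n\<ge>N. l1norm M (\<lambda>x. dyadic_laplace w m x - dyadic_laplace w n x) < e"
  proof (intro exI allI impI)
    fix m n assume m: "N \<le> m" and n: "N \<le> n"
    have "l1norm M (\<lambda>x. dyadic_laplace w m x - dyadic_laplace w n x) \<le> l1norm M (\<lambda>x. dyadic_laplace w m x - dyadic_laplace w N x) + l1norm M (\<lambda>x. dyadic_laplace w N x - dyadic_laplace w n x)"
      by (rule l1norm_triangle) (use dyadic_laplace_integrable[OF w] in auto)
    also have "\<dots> \<le> \<eta> * (1/lam + 1) + \<eta> * (1/lam + 1)"
      using dyadic_laplace_cauchy[OF w h0 _ m] dyadic_laplace_cauchy[OF w h0 _ n] N eta l1norm_diff_commute[of M "dyadic_laplace w N" "dyadic_laplace w n"]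
      by (intro add_mono) auto
    also have "\<dots> < e" unfolding \<eta>_def using e lam_pos by (simp add: field_simps add_pos_pos)
    finally show "l1norm M (\<lambda>x. dyadic_laplace w m x - dyadic_laplace w n x) < e" .
  qed
qed

definition laplace :: "('a \<Rightarrow> real) \<Rightarrow> 'a \<Rightarrow> real" where
  "laplace w = (SOME F. integrable M F \<and> (\<lambda>n. l1norm M (\<lambda>x. dyadic_laplace w n x - F x)) \<longlonglongrightarrow> 0)"

lemma laplace_limit: assumes w: "integrable M w"
  shows "integrable M (laplace w) \<and> (\<lambda>n. l1norm M (\<lambda>x. dyadic_laplace w n x - laplace w x)) \<longlonglongrightarrow> 0"
proof -
  have "\<exists>F. integrable M F \<and> (\<lambda>n. l1norm M (\<lambda>x. dyadic_laplace w n x - F x)) \<longlonglongrightarrow> 0" by (rule dyadic_laplace_convergent[OF w])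
  then show ?thesis unfolding laplace_def by (rule someI_ex)
qed

text \<open>For the Laplace transform U of w, U - e^(-lam h) S(h) U is the integral of e^(-lam t) S(t) w
  over [0, h]; the defect below measures how far this is from h w, and o(h) defect means
  lam U - A U = w.\<close>
definition resolvent_defect :: "('a \<Rightarrow> real) \<Rightarrow> ('a \<Rightarrow> real) \<Rightarrow> real \<Rightarrow> real" where
  "resolvent_defect w X h = l1norm M (\<lambda>x. X x - exp (- lam * h) * S h X x - h * w x)"

lemma resolvent_defect_lipschitz:
  assumes w: "integrable M w" and X: "integrable M X" and Y: "integrable M Y" and h: "h \<ge> 0"
  shows "resolvent_defect w X h \<le> resolvent_defect w Y h + 2 * l1norm M (\<lambda>x. X x - Y x)"
proof -
  let ?c = "exp (- lam * h)"
  have c: "?c \<le> 1" "0 \<le> ?c" using lam_pos h by auto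
  have iS: "integrable M (S h X)" "integrable M (S h Y)" using S_integrable[OF h X] S_integrable[OF h Y] .
  have "resolvent_defect w X h = l1norm M (\<lambda>x. (Y x - ?c * S h Y x - h * w x) + ((X x - Y x) - ?c * (S h X x - S h Y x)))"
    unfolding resolvent_defect_def by (simp add: algebra_simps)
  also have "\<dots> \<le> resolvent_defect w Y h + l1norm M (\<lambda>x. (X x - Y x) - ?c * (S h X x - S h Y x))"
    unfolding resolvent_defect_def by (rule l1norm_add_le) (use w X Y iS in auto)
  also have "l1norm M (\<lambda>x. (X x - Y x) - ?c * (S h X x - S h Y x)) \<le> l1norm M (\<lambda>x. X x - Y x) + l1norm M (\<lambda>x. ?c * (S h X x - S h Y x))"
    by (rule l1norm_diff_le) (use X Y iS in auto)
  also have "l1norm M (\<lambda>x. ?c * (S h X x - S h Y x)) \<le> l1norm M (\<lambda>x. X x - Y x)"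
  proof -
    have "l1norm M (\<lambda>x. ?c * (S h X x - S h Y x)) = ?c * l1norm M (\<lambda>x. S h X x - S h Y x)"
      unfolding l1norm_cmult using c by simp
    also have "\<dots> \<le> 1 * l1norm M (\<lambda>x. S h X x - S h Y x)" using c by (intro mult_right_mono) auto
    also have "\<dots> \<le> l1norm M (\<lambda>x. X x - Y x)" using S_diff_le[OF h X Y] by simp
    finally show ?thesis .
  qed
  finally show ?thesis by simp
qed

lemma resolvent_defect_dyadic_le:
  assumes w: "integrable M w"
    and h0: "\<forall>s. 0 \<le> s \<and> s \<le> h0 \<longrightarrow> l1norm M (\<lambda>x. exp (- lam * s) * S s w x - w x) \<le> \<eta>"
    and nN: "real n * (1/2)^N \<le> h0"
  shows "resolvent_defect w (laplace w) (real n * (1/2)^N) \<le> real n * (1/2)^N * \<eta>"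
proof -
  define h where "h = real n * (1/2::real)^N"
  have hpos: "h \<ge> 0" unfolding h_def by simp
  have bnd: "resolvent_defect w (dyadic_laplace w N') h \<le> h * \<eta>" if NN: "N \<le> N'" for N'
  proof -
    define d' where "d' = (1/2::real)^N'"
    define n' where "n' = n * 2 ^ (N' - N)"
    have nd: "real n' * d' = h" unfolding n'_def d'_def h_def using dyadic_refine[OF NN] by (simp add: algebra_simps)
    have dpos: "d' > 0" unfolding d'_def by simp
    define B where "B x = d' * (\<Sum>j<n'. exp (- lam * d') ^ j * (S d' ^^ j) w x)" for x
    have BI: "integrable M B" unfolding B_def[abs_def] using w S_funpow_integrable[of d' w] dpos by auto
    have r: "ae_eq M (dyadic_laplace w N') (\<lambda>x. B x + exp (- lam * h) * S h (dyadic_laplace w N') x)"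
      using laplace_sum_iterate_time[OF w dpos, of n'] unfolding dyadic_laplace_def B_def[abs_def] nd d'_def[symmetric] by simp
    have "resolvent_defect w (dyadic_laplace w N') h = l1norm M (\<lambda>x. B x - h * w x)"
      unfolding resolvent_defect_def
      by (rule l1norm_cong_ae) (use r w BI dyadic_laplace_integrable[OF w] S_integrable[OF hpos dyadic_laplace_integrable[OF w]] in \<open>auto simp: ae_eq_def elim!: eventually_mono\<close>)
    also have "\<dots> \<le> h * \<eta>"
      using laplace_partial_sum_near[OF w dpos h0, of n'] nd nN unfolding B_def h_def by simp
    finally show ?thesis .
  qed
  have UI: "integrable M (laplace w)" and Ulim: "(\<lambda>n. l1norm M (\<lambda>x. dyadic_laplace w n x - laplace w x)) \<longlonglongrightarrow> 0" using laplace_limit[OF w] by auto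
  have "(\<lambda>N'. h * \<eta> + 2 * l1norm M (\<lambda>x. dyadic_laplace w N' x - laplace w x)) \<longlonglongrightarrow> h * \<eta> + 2 * 0"
    by (intro tendsto_intros Ulim)
  moreover have "\<exists>N0. \<forall>N'\<ge>N0. resolvent_defect w (laplace w) h \<le> h * \<eta> + 2 * l1norm M (\<lambda>x. dyadic_laplace w N' x - laplace w x)"
  proof (intro exI[of _ N] allI impI)
    fix N' assume "N \<le> N'"
    have "resolvent_defect w (laplace w) h \<le> resolvent_defect w (dyadic_laplace w N') h + 2 * l1norm M (\<lambda>x. laplace w x - dyadic_laplace w N' x)"
      by (rule resolvent_defect_lipschitz[OF w UI dyadic_laplace_integrable[OF w] hpos])
    then show "resolvent_defect w (laplace w) h \<le> h * \<eta> + 2 * l1norm M (\<lambda>x. dyadic_laplace w N' x - laplace w x)"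
      using bnd[OF \<open>N \<le> N'\<close>] l1norm_diff_commute[of M "laplace w" "dyadic_laplace w N'"] by simp
  qed
  ultimately have "resolvent_defect w (laplace w) h \<le> h * \<eta> + 2 * 0" by (rule LIMSEQ_le_const)
  then show ?thesis unfolding h_def by simp
qed

lemma resolvent_defect_le:
  assumes w: "integrable M w"
    and h0: "\<forall>s. 0 \<le> s \<and> s \<le> h0 \<longrightarrow> l1norm M (\<lambda>x. exp (- lam * s) * S s w x - w x) \<le> \<eta>"
    and eta: "\<eta> \<ge> 0" and h: "0 \<le> h" "h \<le> h0"
  shows "resolvent_defect w (laplace w) h \<le> h * \<eta>"
proof -
  let ?U = "laplace w"
  define hk where "hk k = real (nat \<lfloor>h * 2^k\<rfloor>) * (1/2::real)^k" for k
  have hk_le: "hk k \<le> h" for k unfolding hk_def by (rule dyadic_floor_le[OF h(1)])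
  have hk0: "0 \<le> hk k" for k unfolding hk_def by simp
  have hkl: "hk \<longlonglongrightarrow> h" unfolding hk_def by (rule dyadic_floor_tendsto[OF h(1)])
  have UI: "integrable M ?U" using laplace_limit[OF w] by auto
  define r where "r k = exp (- lam * hk k) * l1norm M (\<lambda>x. S (hk k) ?U x - S h ?U x)
        + \<bar>exp (- lam * hk k) - exp (- lam * h)\<bar> * l1norm M (S h ?U) + \<bar>hk k - h\<bar> * l1norm M w" for k
  have ineq: "resolvent_defect w ?U h \<le> h * \<eta> + r k" for k
  proof -
    have i1: "integrable M (S (hk k) ?U)" "integrable M (S h ?U)" using S_integrable[OF hk0 UI] S_integrable[OF h(1) UI] by auto
    have "resolvent_defect w ?U h = l1norm M (\<lambda>x. (?U x - exp (- lam * hk k) * S (hk k) ?U x - hk k * w x)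
        + exp (- lam * hk k) * (S (hk k) ?U x - S h ?U x) + (exp (- lam * hk k) - exp (- lam * h)) * S h ?U x
        + (hk k - h) * w x)"
      unfolding resolvent_defect_def by (simp add: algebra_simps)
    also have "\<dots> \<le> resolvent_defect w ?U (hk k) + l1norm M (\<lambda>x. exp (- lam * hk k) * (S (hk k) ?U x - S h ?U x))
        + l1norm M (\<lambda>x. (exp (- lam * hk k) - exp (- lam * h)) * S h ?U x) + l1norm M (\<lambda>x. (hk k - h) * w x)"
      unfolding resolvent_defect_def by (rule l1norm_add4_le) (use UI i1 w in auto)
    also have "\<dots> = resolvent_defect w ?U (hk k) + r k" unfolding r_def l1norm_cmult by simp
    also have "resolvent_defect w ?U (hk k) \<le> hk k * \<eta>"
      unfolding hk_def by (rule resolvent_defect_dyadic_le[OF w h0]) (use hk_le[of k] h in \<open>auto simp: hk_def\<close>)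
    also have "\<dots> \<le> h * \<eta>" using hk_le eta by (intro mult_right_mono) auto
    finally show ?thesis by simp
  qed
  have "continuous (at h within {0..}) (\<lambda>t. l1norm M (\<lambda>x. S t ?U x - S h ?U x))"
    unfolding continuous_within using S_continuous[OF UI h(1)] by (simp add: l1norm_def)
  then have "(\<lambda>k. l1norm M (\<lambda>x. S (hk k) ?U x - S h ?U x)) \<longlonglongrightarrow> l1norm M (\<lambda>x. S h ?U x - S h ?U x)"
    by (rule continuous_within_tendsto_compose'[OF _ _ hkl]) (use hk0 in auto)
  then have "r \<longlonglongrightarrow> exp (- lam * h) * 0 + \<bar>exp (- lam * h) - exp (- lam * h)\<bar> * l1norm M (S h ?U) + \<bar>h - h\<bar> * l1norm M w"
    unfolding r_def by (intro tendsto_intros hkl) (simp add: l1norm_def)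
  then have "(\<lambda>k. h * \<eta> + r k) \<longlonglongrightarrow> h * \<eta> + 0" by (intro tendsto_intros) simp
  then show ?thesis using ineq by (intro LIMSEQ_le_const[of "\<lambda>k. h * \<eta> + r k"]) auto
qed

lemma laplace_difference_quotient_le:
  assumes w: "integrable M w" and h: "h > 0"
  shows "l1norm M (\<lambda>x. (S h (laplace w) x - laplace w x) / h - (lam * laplace w x - w x))
    \<le> \<bar>(exp (lam * h) - 1) / h - lam\<bar> * l1norm M (laplace w) + \<bar>exp (lam * h) - 1\<bar> * l1norm M w
       + (exp (lam * h) / h) * resolvent_defect w (laplace w) h"
proof -
  let ?U = "laplace w"
  have UI: "integrable M ?U" using laplace_limit[OF w] by auto
  have cC: "exp (- lam * h) * exp (lam * h) = 1" by (simp add: exp_minus field_simps)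
  have "l1norm M (\<lambda>x. (S h ?U x - ?U x) / h - (lam * ?U x - w x))
      = l1norm M (\<lambda>x. ((exp (lam * h) - 1) / h - lam) * ?U x + (- (exp (lam * h) - 1)) * w x
          + (- (exp (lam * h) / h)) * (?U x - exp (- lam * h) * S h ?U x - h * w x))"
    by (rule arg_cong[where f="l1norm M"], rule ext, subst difference_quotient_identity[OF cC h]) (simp add: algebra_simps)
  also have "\<dots> \<le> l1norm M (\<lambda>x. ((exp (lam * h) - 1) / h - lam) * ?U x) + l1norm M (\<lambda>x. (- (exp (lam * h) - 1)) * w x)
      + l1norm M (\<lambda>x. (- (exp (lam * h) / h)) * (?U x - exp (- lam * h) * S h ?U x - h * w x))"
    by (rule l1norm_add3_le) (use UI w S_integrable[of h ?U] h in auto)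
  finally show ?thesis
    unfolding resolvent_defect_def l1norm_cmult using h by (simp add: abs_minus_commute)
qed

lemma laplace_difference_quotient_tendsto:
  assumes w: "integrable M w"
  shows "((\<lambda>h. l1norm M (\<lambda>x. (S h (laplace w) x - laplace w x) / h - (lam * laplace w x - w x))) \<longlongrightarrow> 0) (at_right 0)"
proof -
  let ?U = "laplace w"
  define b where "b h = \<bar>(exp (lam * h) - 1) / h - lam\<bar> * l1norm M ?U + \<bar>exp (lam * h) - 1\<bar> * l1norm M w" for h
  have "(b \<longlongrightarrow> \<bar>lam - lam\<bar> * l1norm M ?U + \<bar>exp (lam * 0) - 1\<bar> * l1norm M w) (at_right 0)"
    unfolding b_def by (intro tendsto_intros exp_difference_quotient_tendsto)
  then have b0: "(b \<longlongrightarrow> 0) (at_right 0)" by simp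
  have C1: "((\<lambda>h. exp (lam * h)) \<longlongrightarrow> exp (lam * 0)) (at_right (0::real))" by (intro tendsto_intros)
  show ?thesis
    unfolding tendsto_iff
  proof (intro allI impI)
    fix e :: real assume e: "e > 0"
    define \<eta> where "\<eta> = e / 4"
    have eta: "\<eta> > 0" unfolding \<eta>_def using e by simp
    obtain h0 where h0p: "h0 > 0" and h0: "\<forall>s. 0 \<le> s \<and> s \<le> h0 \<longrightarrow> l1norm M (\<lambda>x. exp (- lam * s) * S s w x - w x) \<le> \<eta>"
      using damped_orbit_near_0[OF w eta] by auto
    have ev1: "\<forall>\<^sub>F h in at_right 0. b h < e / 2" using order_tendstoD(2)[OF b0, of "e/2"] e by simp
    have ev2: "\<forall>\<^sub>F h in at_right 0. exp (lam * h) < 2" using order_tendstoD(2)[OF C1, of 2] by simp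
    have ev3: "\<forall>\<^sub>F h in at_right 0. h < h0" using h0p
      unfolding eventually_at_right_field by (auto intro: exI[of _ h0])
    have ev4: "\<forall>\<^sub>F h in at_right (0::real). 0 < h" by (rule eventually_at_right_less)
    show "\<forall>\<^sub>F h in at_right 0. dist (l1norm M (\<lambda>x. (S h ?U x - ?U x) / h - (lam * ?U x - w x))) 0 < e"
      using ev1 ev2 ev3 ev4
    proof eventually_elim
      case (elim h)
      have "(exp (lam * h) / h) * resolvent_defect w ?U h \<le> (exp (lam * h) / h) * (h * \<eta>)"
        using resolvent_defect_le[OF w h0, of h] eta elim by (intro mult_left_mono) auto
      also have "\<dots> = exp (lam * h) * \<eta>" using elim by simp
      also have "\<dots> \<le> 2 * \<eta>" using elim eta by (intro mult_right_mono) auto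
      finally have "l1norm M (\<lambda>x. (S h ?U x - ?U x) / h - (lam * ?U x - w x)) < e"
        using laplace_difference_quotient_le[OF w, of h] elim unfolding b_def \<eta>_def by linarith
      then show ?case by simp
    qed
  qed
qed

lemma resolvent_equation_solvable:
  assumes w: "integrable M w"
  shows "\<exists>u\<in>D. ae_eq M (\<lambda>x. lam * u x - A u x) w"
proof
  let ?U = "laplace w"
  have UI: "integrable M ?U" using laplace_limit[OF w] by auto
  have g: "integrable M (\<lambda>x. lam * ?U x - w x)" using UI w by auto
  show UD: "?U \<in> D" unfolding domain_eq using UI g laplace_difference_quotient_tendsto[OF w] by blast
  have AU: "integrable M (A ?U)" and AL: "((\<lambda>h. l1norm M (\<lambda>x. (S h ?U x - ?U x) / h - A ?U x)) \<longlongrightarrow> 0) (at_right 0)"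
    using generator_tendsto[OF UD] by auto
  have "ae_eq M (A ?U) (\<lambda>x. lam * ?U x - w x)"
    by (rule l1_limit_unique[OF trivial_limit_at_right_real AU g _ AL laplace_difference_quotient_tendsto[OF w]])
       (use UI S_integrable[of _ ?U] eventually_at_right_less[of 0] in \<open>auto elim!: eventually_mono\<close>)
  then show "ae_eq M (\<lambda>x. lam * ?U x - A ?U x) w" unfolding ae_eq_def by (auto elim!: eventually_mono)
qed

lemma resolvent_equation_nonneg:
  assumes u: "u \<in> D" and r: "ae_eq M (\<lambda>x. lam * u x - A u x) w" and w: "integrable M w"
    and wp: "AE x in M. 0 \<le> w x"
  shows "AE x in M. 0 \<le> u x"
proof -
  define chi where "chi x = (if u x < 0 then 1 else (0::real))" for x
  have ui: "integrable M u" using u by (rule domain_integrable)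
  have Au: "integrable M (A u)" using generator_tendsto[OF u] by auto
  define um where "um x = max (- u x) 0" for x
  have umi: "integrable M um" unfolding um_def[abs_def] using ui by (intro integrable_max) auto
  have ci: "integrable M (\<lambda>x. chi x * g x)" if "integrable M g" for g
    unfolding chi_def using integrable_neg_indicator_mult[OF ui that] .
  have [measurable]: "u \<in> borel_measurable M" "A u \<in> borel_measurable M" "w \<in> borel_measurable M" using ui Au w by auto
  have "(\<integral>x. chi x * (lam * u x - A u x) \<partial>M) = (\<integral>x. chi x * w x \<partial>M)"
    by (rule integral_cong_AE) (use r in \<open>auto simp: ae_eq_def chi_def elim!: eventually_mono\<close>)
  also have "\<dots> \<ge> 0" by (rule integral_nonneg_AE) (use wp in \<open>auto simp: chi_def elim!: eventually_mono\<close>)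
  finally have 1: "0 \<le> (\<integral>x. chi x * (lam * u x - A u x) \<partial>M)" .
  have "(\<integral>x. chi x * (lam * u x - A u x) \<partial>M) = lam * (\<integral>x. chi x * u x \<partial>M) - (\<integral>x. chi x * A u x \<partial>M)"
    using ci[OF ui] ci[OF Au] by (simp add: algebra_simps)
  moreover have "(\<integral>x. chi x * u x \<partial>M) = - (\<integral>x. um x \<partial>M)"
  proof -
    have "(\<lambda>x. chi x * u x) = (\<lambda>x. - um x)" by (rule ext) (auto simp: chi_def um_def)
    then show ?thesis by simp
  qed
  moreover have "0 \<le> (\<integral>x. chi x * A u x \<partial>M)" unfolding chi_def by (rule generator_dissipative[OF u])
  ultimately have "lam * (\<integral>x. um x \<partial>M) \<le> 0" using 1 by simp
  then have "(\<integral>x. um x \<partial>M) \<le> 0" using lam_pos by (simp add: mult_le_0_iff)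
  moreover have "(\<integral>x. um x \<partial>M) \<ge> 0" by (rule integral_nonneg_AE) (auto simp: um_def)
  ultimately have "(\<integral>x. um x \<partial>M) = 0" by simp
  then have "AE x in M. um x = 0" using umi by (subst (asm) integral_nonneg_eq_0_iff_AE) (auto simp: um_def)
  then show ?thesis by (rule eventually_mono) (auto simp: um_def)
qed

lemma resolvent_equation_zero:
  assumes u: "u \<in> D" and r: "ae_eq M (\<lambda>x. lam * u x - A u x) (\<lambda>x. 0)"
  shows "AE x in M. u x = 0"
proof -
  have p1: "AE x in M. 0 \<le> u x" by (rule resolvent_equation_nonneg[OF u r]) auto
  have n: "(\<lambda>x. - u x) \<in> D" "ae_eq M (A (\<lambda>x. - u x)) (\<lambda>x. - A u x)" using domain_uminus[OF u] by auto
  have r2: "ae_eq M (\<lambda>x. lam * (- u x) - A (\<lambda>x. - u x) x) (\<lambda>x. 0)"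
    using r n(2) unfolding ae_eq_def by (auto elim: eventually_elim2)
  have p2: "AE x in M. 0 \<le> - u x" by (rule resolvent_equation_nonneg[OF n(1) r2]) auto
  show ?thesis using p1 p2 by (auto elim: eventually_elim2)
qed

abbreviation R :: "('a \<Rightarrow> real) \<Rightarrow> 'a \<Rightarrow> real" where "R \<equiv> resolvent M D A lam"

lemma resolvent_spec: assumes w: "integrable M w"
  shows "R w \<in> D \<and> ae_eq M (\<lambda>x. lam * R w x - A (R w) x) w"
proof -
  have "\<exists>u. u \<in> D \<and> ae_eq M (\<lambda>x. lam * u x - A u x) w" using resolvent_equation_solvable[OF w] by blast
  then show ?thesis unfolding resolvent_def by (rule someI_ex)
qed

lemma resolvent_in_domain: "integrable M w \<Longrightarrow> R w \<in> D" using resolvent_spec by blast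

lemma resolvent_integrable: "integrable M w \<Longrightarrow> integrable M (R w)" using resolvent_in_domain domain_integrable by blast

lemma resolvent_equation: "integrable M w \<Longrightarrow> ae_eq M (\<lambda>x. lam * R w x - A (R w) x) w" using resolvent_spec by blast

lemma resolvent_nonneg: "integrable M w \<Longrightarrow> (AE x in M. 0 \<le> w x) \<Longrightarrow> AE x in M. 0 \<le> R w x"
  using resolvent_equation_nonneg resolvent_in_domain resolvent_equation by blast

lemma resolvent_lincomb:
  assumes f: "integrable M f" and g: "integrable M g"
  shows "ae_eq M (R (\<lambda>x. a * f x + b * g x)) (\<lambda>x. a * R f x + b * R g x)"
proof -
  let ?F = "\<lambda>x. a * f x + b * g x"
  have Fi: "integrable M ?F" using f g by auto
  have G: "(\<lambda>x. a * R f x + b * R g x) \<in> D" "ae_eq M (A (\<lambda>x. a * R f x + b * R g x)) (\<lambda>x. a * A (R f) x + b * A (R g) x)"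
    using domain_lincomb[OF resolvent_in_domain[OF f] resolvent_in_domain[OF g], of a b] by auto
  have d: "(\<lambda>x. R ?F x - (a * R f x + b * R g x)) \<in> D"
    "ae_eq M (A (\<lambda>x. R ?F x - (a * R f x + b * R g x))) (\<lambda>x. A (R ?F) x - A (\<lambda>x. a * R f x + b * R g x) x)"
    using domain_diff[OF resolvent_in_domain[OF Fi] G(1)] by auto
  have "ae_eq M (\<lambda>x. lam * (R ?F x - (a * R f x + b * R g x)) - A (\<lambda>x. R ?F x - (a * R f x + b * R g x)) x) (\<lambda>x. 0)"
    using d(2) G(2) resolvent_equation[OF Fi] resolvent_equation[OF f] resolvent_equation[OF g] unfolding ae_eq_def
  proof eventually_elim
    case (elim x) then show ?case by (simp add: algebra_simps)
  qed
  then have "AE x in M. R ?F x - (a * R f x + b * R g x) = 0" by (rule resolvent_equation_zero[OF d(1)])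
  then show ?thesis unfolding ae_eq_def by (rule eventually_mono) simp
qed

lemma resolvent_cong:
  assumes f: "integrable M f" and g: "integrable M g" and e: "ae_eq M f g"
  shows "ae_eq M (R f) (R g)"
proof -
  have d: "(\<lambda>x. R f x - R g x) \<in> D" "ae_eq M (A (\<lambda>x. R f x - R g x)) (\<lambda>x. A (R f) x - A (R g) x)"
    using domain_diff[OF resolvent_in_domain[OF f] resolvent_in_domain[OF g]] by auto
  have "ae_eq M (\<lambda>x. lam * (R f x - R g x) - A (\<lambda>x. R f x - R g x) x) (\<lambda>x. 0)"
    using d(2) resolvent_equation[OF f] resolvent_equation[OF g] e unfolding ae_eq_def
  proof eventually_elim
    case (elim x) then show ?case by (simp add: algebra_simps)
  qed
  then have "AE x in M. R f x - R g x = 0" by (rule resolvent_equation_zero[OF d(1)])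
  then show ?thesis unfolding ae_eq_def by (rule eventually_mono) simp
qed

lemma resolvent_ae_zero_imp: assumes w: "integrable M w" and z: "AE x in M. R w x = 0"
  shows "AE x in M. w x = 0"
proof -
  have "AE x in M. A (R w) x = 0" by (rule generator_ae_zero[OF resolvent_in_domain[OF w] z])
  then show ?thesis using z resolvent_equation[OF w] unfolding ae_eq_def by (auto elim: eventually_elim2)
qed

end

section \<open>The jump operator $P(\varphi R(\lambda,A))$\<close>

locale stochastic_perturbation = laplace_resolvent M S D A lam
  for M :: "'a measure" and S D A lam +
  fixes S0 :: "real \<Rightarrow> ('a \<Rightarrow> real) \<Rightarrow> ('a \<Rightarrow> real)" and D0 :: "('a \<Rightarrow> real) set"
    and A0 P :: "('a \<Rightarrow> real) \<Rightarrow> ('a \<Rightarrow> real)" and \<phi> :: "'a \<Rightarrow> real"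
  assumes S0: "stochastic_semigroup M S0" and gen0: "is_generator M S0 D0 A0"
    and phi_measurable: "\<phi> \<in> borel_measurable M" and phi_nonneg: "\<forall>x. \<phi> x \<ge> 0"
    and P: "stochastic_op M P"
    and D_subset: "D \<subseteq> D0 \<inter> L1_weighted M \<phi>"
    and A_eq: "\<forall>u\<in>D. ae_eq M (A u) (\<lambda>x. A0 u x - \<phi> x * u x)"
begin

definition jump_op :: "('a \<Rightarrow> real) \<Rightarrow> 'a \<Rightarrow> real" where
  "jump_op w = P (\<lambda>y. \<phi> y * R w y)"

lemma phi_resolvent_integrable:
  assumes w: "integrable M w"
  shows "integrable M (\<lambda>y. \<phi> y * R w y)"
proof (rule integrableI_bounded)
  have [measurable]: "\<phi> \<in> borel_measurable M" "R w \<in> borel_measurable M"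
    using phi_measurable resolvent_integrable[OF w] by auto
  show "(\<lambda>y. \<phi> y * R w y) \<in> borel_measurable M" by measurable
  have "R w \<in> L1_weighted M \<phi>" using resolvent_in_domain[OF w] D_subset by auto
  then show "(\<integral>\<^sup>+ x. ennreal (norm (\<phi> x * R w x)) \<partial>M) < \<infinity>"
    unfolding L1_weighted_def using phi_nonneg by (simp add: abs_mult)
qed

lemma jump_op_integrable: "integrable M w \<Longrightarrow> integrable M (jump_op w)"
  unfolding jump_op_def using lin_op_integrable[OF stochastic_op_lin_op[OF P] phi_resolvent_integrable] .

lemma jump_op_nonneg:
  assumes w: "integrable M w" and wp: "AE x in M. 0 \<le> w x"
  shows "AE x in M. 0 \<le> jump_op w x"
proof -
  have "AE x in M. 0 \<le> \<phi> x * R w x" using resolvent_nonneg[OF w wp] phi_nonneg by (auto elim!: eventually_mono)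
  then show ?thesis unfolding jump_op_def
    using stochastic_op_nonneg_integral[OF P phi_resolvent_integrable[OF w]] by auto
qed

lemma integral_resolvent_balance:
  assumes w: "integrable M w"
  shows "integral\<^sup>L M w = lam * integral\<^sup>L M (R w) + integral\<^sup>L M (\<lambda>x. \<phi> x * R w x)"
proof -
  let ?u = "R w"
  have uD0: "?u \<in> D0" using resolvent_in_domain[OF w] D_subset by auto
  have ui: "integrable M ?u" by (rule resolvent_integrable[OF w])
  have A0i: "integrable M (A0 ?u)" using gen0 uD0 unfolding is_generator_def L1_def by auto
  have e1: "ae_eq M (A ?u) (\<lambda>x. A0 ?u x - \<phi> x * ?u x)" using A_eq resolvent_in_domain[OF w] by auto
  have e2: "ae_eq M (\<lambda>x. lam * ?u x - A ?u x) w" by (rule resolvent_equation[OF w])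
  have [measurable]: "w \<in> borel_measurable M" "?u \<in> borel_measurable M" "A0 ?u \<in> borel_measurable M"
    "\<phi> \<in> borel_measurable M"
    using w ui A0i phi_measurable by auto
  have "integral\<^sup>L M w = integral\<^sup>L M (\<lambda>x. lam * ?u x - A0 ?u x + \<phi> x * ?u x)"
    by (rule integral_cong_AE) (use w ui A0i e1 e2 in \<open>auto simp: ae_eq_def elim: eventually_elim2\<close>)
  also have "\<dots> = lam * integral\<^sup>L M ?u - integral\<^sup>L M (A0 ?u) + integral\<^sup>L M (\<lambda>x. \<phi> x * ?u x)"
    using ui A0i phi_resolvent_integrable[OF w] by simp
  finally show ?thesis using stochastic_generator_integral_0[OF S0 gen0 uD0] by simp
qed

lemma jump_op_norm_eq:
  assumes w: "integrable M w" and wp: "AE x in M. 0 \<le> w x"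
  shows "l1norm M (jump_op w) = l1norm M w - lam * l1norm M (R w)"
proof -
  have up: "AE x in M. 0 \<le> R w x" by (rule resolvent_nonneg[OF w wp])
  have "AE x in M. 0 \<le> \<phi> x * R w x" using up phi_nonneg by (auto elim!: eventually_mono)
  then have "integral\<^sup>L M (jump_op w) = integral\<^sup>L M (\<lambda>x. \<phi> x * R w x)"
    unfolding jump_op_def using stochastic_op_nonneg_integral[OF P phi_resolvent_integrable[OF w]] by simp
  moreover have "l1norm M (jump_op w) = integral\<^sup>L M (jump_op w)"
    by (rule l1norm_eq_integral[OF jump_op_nonneg[OF w wp]]) (use jump_op_integrable[OF w] in auto)
  moreover have "l1norm M w = integral\<^sup>L M w" by (rule l1norm_eq_integral[OF wp]) (use w in auto)
  moreover have "l1norm M (R w) = integral\<^sup>L M (R w)"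
    by (rule l1norm_eq_integral[OF up]) (use resolvent_integrable[OF w] in auto)
  ultimately show ?thesis using integral_resolvent_balance[OF w] by simp
qed

lemma jump_op_lin_op: "lin_op M jump_op"
  unfolding lin_op_def L1_def
proof (intro conjI ballI allI impI)
  note PL = stochastic_op_lin_op[OF P]
  fix f :: "'a \<Rightarrow> real" assume "f \<in> {f. integrable M f}" then show "jump_op f \<in> {f. integrable M f}"
    using jump_op_integrable by auto
next
  note PL = stochastic_op_lin_op[OF P]
  fix f g :: "'a \<Rightarrow> real" assume fg: "f \<in> {f. integrable M f}" "g \<in> {f. integrable M f}" and e: "ae_eq M f g"
  have "ae_eq M (R f) (R g)" by (rule resolvent_cong) (use fg e in auto)
  then have "ae_eq M (\<lambda>y. \<phi> y * R f y) (\<lambda>y. \<phi> y * R g y)"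
    unfolding ae_eq_def by (auto elim!: eventually_mono)
  then show "ae_eq M (jump_op f) (jump_op g)"
    unfolding jump_op_def by (rule lin_op_cong[OF PL phi_resolvent_integrable phi_resolvent_integrable, rotated 2]) (use fg in auto)
next
  note PL = stochastic_op_lin_op[OF P]
  fix f g :: "'a \<Rightarrow> real" and a b :: real assume "f \<in> {f. integrable M f}" "g \<in> {f. integrable M f}"
  then have fi: "integrable M f" and gi: "integrable M g" by auto
  let ?F = "\<lambda>x. a * f x + b * g x"
  let ?G = "\<lambda>y. a * (\<phi> y * R f y) + b * (\<phi> y * R g y)"
  have "ae_eq M (\<lambda>y. \<phi> y * R ?F y) ?G"
    using resolvent_lincomb[OF fi gi, of a b] unfolding ae_eq_def by (auto elim!: eventually_mono simp: algebra_simps)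
  moreover have "integrable M ?F" "integrable M ?G"
    using fi gi phi_resolvent_integrable[OF fi] phi_resolvent_integrable[OF gi] by auto
  ultimately have "ae_eq M (jump_op ?F) (P ?G)"
    unfolding jump_op_def by (intro lin_op_cong[OF PL phi_resolvent_integrable])
  moreover have "ae_eq M (P ?G) (\<lambda>x. a * jump_op f x + b * jump_op g x)"
    unfolding jump_op_def by (rule lin_op_lincomb[OF PL phi_resolvent_integrable[OF fi] phi_resolvent_integrable[OF gi]])
  ultimately show "ae_eq M (jump_op ?F) (\<lambda>x. a * jump_op f x + b * jump_op g x)" by (rule ae_eq_trans)
qed

lemma jump_op_pos_contraction: "pos_contraction M jump_op"
proof -
  have pos: "positive_op M jump_op" unfolding positive_op_def L1_def using jump_op_nonneg by auto
  have "contraction_op M jump_op"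
  proof (rule pos_contraction_if_nonneg_le[OF jump_op_lin_op pos])
    fix w :: "'a \<Rightarrow> real" assume w: "integrable M w" and wp: "AE x in M. 0 \<le> w x"
    show "l1norm M (jump_op w) \<le> l1norm M w"
      using jump_op_norm_eq[OF w wp] lam_pos l1norm_nonneg[of M "R w"] by simp
  qed
  then show ?thesis using jump_op_lin_op pos unfolding pos_contraction_def by auto
qed

lemma jump_op_fixed_point_eq_0:
  assumes w: "integrable M w" and wp: "AE x in M. 0 \<le> w x" and fixed: "ae_eq M (jump_op w) w"
  shows "AE x in M. w x = 0"
proof -
  have "l1norm M (jump_op w) = l1norm M w" by (rule l1norm_cong_ae[OF jump_op_integrable[OF w] w fixed])
  then have "l1norm M (R w) = 0" using jump_op_norm_eq[OF w wp] lam_pos by simp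
  then have "AE x in M. R w x = 0" using l1norm_eq_0_iff[OF resolvent_integrable[OF w]] by simp
  then show ?thesis by (rule resolvent_ae_zero_imp[OF w])
qed

end

theorem theorem3p2:
  fixes M :: "'a measure"
    and S0 S :: "real \<Rightarrow> ('a \<Rightarrow> real) \<Rightarrow> ('a \<Rightarrow> real)"
    and D0 D :: "('a \<Rightarrow> real) set"
    and A0 A P :: "('a \<Rightarrow> real) \<Rightarrow> ('a \<Rightarrow> real)"
    and \<phi> v :: "'a \<Rightarrow> real"
    and lam :: real
  assumes "sigma_finite_measure M"
    and "stochastic_semigroup M S0"
    and "is_generator M S0 D0 A0"
    and "\<phi> \<in> borel_measurable M"
    and "\<forall>x. \<phi> x \<ge> 0"
    and "stochastic_op M P"
    and "D \<subseteq> D0 \<inter> L1_weighted M \<phi>"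
    and "\<forall>u\<in>D. ae_eq M (A u) (\<lambda>x. A0 u x - \<phi> x * u x)"
    and "C0_semigroup M S"
    and "\<forall>t\<ge>0. positive_op M (S t) \<and> contraction_op M (S t)"
    and "is_generator M S D A"
    and "lam > 0"
    and "v \<in> L1 M"
    and "AE x in M. v x > 0"
    and "AE x in M. P (\<lambda>y. \<phi> y * resolvent M D A lam v y) x \<le> v x"
  shows "\<forall>u\<in>L1 M. ((\<lambda>n. l1norm M (((\<lambda>w. P (\<lambda>y. \<phi> y * resolvent M D A lam w y)) ^^ n) u))
            \<longlonglongrightarrow> 0)"
proof -
  interpret stochastic_perturbation M S D A lam S0 D0 A0 P \<phi>
    using assms(2-12) by unfold_locales auto
  have v: "integrable M v" and vp: "AE x in M. 0 \<le> v x"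
    using assms(13,14) by (auto simp: L1_def elim!: eventually_mono)
  have Kv: "AE x in M. jump_op v x \<le> v x" using assms(15) by (simp add: jump_op_def)
  have "(\<lambda>n. l1norm M ((jump_op ^^ n) v)) \<longlonglongrightarrow> 0"
    using funpow_tendsto_0_subinvariant[OF jump_op_pos_contraction jump_op_fixed_point_eq_0 v vp Kv] .
  moreover have "jump_op = (\<lambda>w. P (\<lambda>y. \<phi> y * resolvent M D A lam w y))"
    by (simp add: fun_eq_iff jump_op_def)
  ultimately show ?thesis
    using funpow_tendsto_0_strictly_positive[OF jump_op_pos_contraction _ v assms(14)] by (auto simp: L1_def)
qed

end
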